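(* Let $S$ be a blocked sequence in which every symbol occurs at least twice, and let $\mathcal T$ be any derivation tree of $S$. Let $v$ be a leaf of $\mathcal T$ and let $a\ne b$ be symbols in the block $\mathcal B(v)$ of $S$. Suppose (i) $v$ is not a wingtip of $\mathcal T_{|a}$ nor of $\mathcal T_{|b}$, and (ii) $v$ is not a feather of $\mathcal T_{|a}$ nor of $\mathcal T_{|b}$. Then $a$ and $b$ are nested in $\mathcal B(v)$: there are $\{x,y\}=\{a,b\}$ such that $S$ contains an occurrence of $x$, followed later by an occurrence of $y$, both before the block $\mathcal B(v)$, and after $\mathcal B(v)$ an occurrence of $y$ followed later by an occurrence of $x$.
   Context: A block is a sequence of distinct symbols; a blocked sequence is a concatenation of blocks. Derivation trees are defined recursively for blocked sequences $S$ with $m$ blocks in which every symbol occurs at least twice. If $m=1$ ($S$ has no symbols), $\mathcal T(S)$ is a single node carrying the block. If $m=2$, $S=\beta_1\beta_2$; $\mathcal T(S)$ is a root $u$ (no block) with children $u_1,u_2$, $\mathcal B(u_q)=\beta_q$, and for every symbol $a$: crown $\mathrm{cr}_a=u$, left head $\mathrm{lhe}_a=u_1$, right head $\mathrm{rhe}_a=u_2$. If $m>2$, choose any $2\le\hat m<m$ and split $S$ into consecutive intervals $S_1\cdots S_{\hat m}$ of $m_q\ge1$ blocks. A symbol is local to $S_q$ if it occurs only in $S_q$, global otherwise. Let $\check S_q$ be $S_q$ with global symbols deleted (still $m_q$ blocks) and $\hat S'=\beta_1\cdots\beta_{\hat m}$ with $\beta_q$ the block of distinct global symbols of $S_q$.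 Recursively build derivation trees $\hat{\mathcal T}$ of $\hat S'$ and $\check{\mathcal T}_q$ of $\check S_q$; identify the root of $\check{\mathcal T}_q$ with the $q$-th leaf of $\hat{\mathcal T}$ (keeping block $\beta_q$ if $m_q\ge2$); assign the $m$ blocks of $S$ to the $m$ leaves of the resulting tree in left-to-right order; other nodes keep their blocks. Crowns and heads are inherited from $\hat{\mathcal T}$ (global symbols) or $\check{\mathcal T}_q$ (symbols local to $S_q$). For a symbol $a$, $\mathcal T_{|a}$ is the tree on $\{\mathrm{cr}_a\}\cup\{v:a\in\mathcal B(v)\}$ where the parent of a non-crown node is its nearest strict ancestor in this set. Its leftmost and rightmost leaves are the wingtips $\mathrm{lwt}_a,\mathrm{rwt}_a$. The left wing is the path in $\mathcal T_{|a}$ from $\mathrm{lhe}_a$ to $\mathrm{lwt}_a$, the right wing the path from $\mathrm{rhe}_a$ to $\mathrm{rwt}_a$. Descendants (inclusive) of $\mathrm{lhe}_a$ in $\mathcal T_{|a}$ are doves, of $\mathrm{rhe}_a$ hawks. A quill is a child (in $\mathcal T_{|a}$) of a wing node that is not itself a wing node. A feather is a leaf of $\mathcal T_{|a}$ that is the rightmost leaf descendant in $\mathcal T_{|a}$ of a dove quill, or the leftmost leaf descendant of a hawk quill. *)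

theory Defs
  imports Main "HOL-Library.List_Lexorder"
begin

text \<open>Nodes of a (finite, ordered, rooted) tree are addresses: lists of child indices.
  The root is the empty list, the children of p are p @ [i], ordered left-to-right by i.
  A tree is a node set N together with a block labelling B (None = no block).
  The left-to-right order of leaves is the lexicographic order on addresses.\<close>

type_synonym node = "nat list"

definition syms :: "'a list list \<Rightarrow> 'a set" where
  "syms S = set (concat S)"

definition blocked_twice :: "'a list list \<Rightarrow> bool" where
  "blocked_twice S \<longleftrightarrow> (\<forall>\<beta>\<in>set S. distinct \<beta>) \<and> (\<forall>a\<in>syms S. 2 \<le> count_list (concat S) a)"

definition tleaves :: "node set \<Rightarrow> node set" where
  "tleaves N = {p\<in>N. \<forall>i. p @ [i] \<notin> N}"

definition leaf_list :: "node set \<Rightarrow> node list" where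
  "leaf_list N = sorted_list_of_set (tleaves N)"

definition is_global :: "'a list list list \<Rightarrow> 'a \<Rightarrow> bool" where
  "is_global Ss a \<longleftrightarrow> (\<exists>q1<length Ss. \<exists>q2<length Ss. q1 \<noteq> q2 \<and> a \<in> syms (Ss!q1) \<and> a \<in> syms (Ss!q2))"

definition strict_anc :: "node \<Rightarrow> node \<Rightarrow> bool" where
  "strict_anc u v \<longleftrightarrow> (\<exists>w. w \<noteq> [] \<and> v = u @ w)"

text \<open>deriv S N B cr lhe rhe: (N,B) with crown / left head / right head maps cr, lhe, rhe
  is a derivation tree of S (the maps are only constrained on symbols of S).\<close>
inductive deriv :: "'a list list \<Rightarrow> node set \<Rightarrow> (node \<Rightarrow> 'a list option)
    \<Rightarrow> ('a \<Rightarrow> node) \<Rightarrow> ('a \<Rightarrow> node) \<Rightarrow> ('a \<Rightarrow> node) \<Rightarrow> bool" where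
  one: "blocked_twice [\<beta>] \<Longrightarrow>
    deriv [\<beta>] {[]} (\<lambda>p. if p = [] then Some \<beta> else None) cr lhe rhe"
| two: "blocked_twice [\<beta>1, \<beta>2] \<Longrightarrow>
    \<forall>a\<in>syms [\<beta>1, \<beta>2]. cr a = [] \<and> lhe a = [0] \<and> rhe a = [1] \<Longrightarrow>
    deriv [\<beta>1, \<beta>2] {[], [0], [1]}
      (\<lambda>p. if p = [0] then Some \<beta>1 else if p = [1] then Some \<beta>2 else None) cr lhe rhe"
| split: "\<lbrakk> blocked_twice S; 2 < length S;
    concat Ss = S; 2 \<le> length Ss; length Ss < length S; \<forall>q<length Ss. Ss!q \<noteq> [];
    length Sh = length Ss;
    \<forall>q<length Ss. distinct (Sh!q) \<and> set (Sh!q) = {a\<in>syms (Ss!q). is_global Ss a};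
    deriv Sh Nh Bh crh lheh rheh;
    \<forall>q<length Ss. deriv (map (filter (\<lambda>a. \<not> is_global Ss a)) (Ss!q))
                         (Nc q) (Bc q) (crc q) (lhec q) (rhec q);
    length (leaf_list Nh) = length Ss;
    N = Nh \<union> (\<Union>q<length Ss. (\<lambda>w. leaf_list Nh ! q @ w) ` Nc q);
    length (leaf_list N) = length S;
    \<forall>p. p \<notin> N \<longrightarrow> B p = None;
    \<forall>i<length S. B (leaf_list N ! i) = Some (S!i);
    \<forall>p\<in>Nh. p \<notin> tleaves N \<longrightarrow> B p = Bh p;
    \<forall>q<length Ss. \<forall>w\<in>Nc q. w \<noteq> [] \<and> leaf_list Nh ! q @ w \<notin> tleaves N \<longrightarrow>
        B (leaf_list Nh ! q @ w) = Bc q w;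
    \<forall>a\<in>syms S. is_global Ss a \<longrightarrow> cr a = crh a \<and> lhe a = lheh a \<and> rhe a = rheh a;
    \<forall>q<length Ss. \<forall>a\<in>syms (Ss!q). \<not> is_global Ss a \<longrightarrow>
        cr a = leaf_list Nh ! q @ crc q a \<and> lhe a = leaf_list Nh ! q @ lhec q a \<and>
        rhe a = leaf_list Nh ! q @ rhec q a \<rbrakk>
   \<Longrightarrow> deriv S N B cr lhe rhe"

definition inblk :: "node set \<Rightarrow> (node \<Rightarrow> 'a list option) \<Rightarrow> 'a \<Rightarrow> node \<Rightarrow> bool" where
  "inblk N B a v \<longleftrightarrow> v \<in> N \<and> (\<exists>\<beta>. B v = Some \<beta> \<and> a \<in> set \<beta>)"

definition rnodes :: "node set \<Rightarrow> (node \<Rightarrow> 'a list option) \<Rightarrow> ('a \<Rightarrow> node) \<Rightarrow> 'a \<Rightarrow> node set" where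
  "rnodes N B cr a = insert (cr a) {v. inblk N B a v}"

text \<open>rpar N B cr a u v: u is the parent of v in T|a.\<close>
definition rpar :: "node set \<Rightarrow> (node \<Rightarrow> 'a list option) \<Rightarrow> ('a \<Rightarrow> node) \<Rightarrow> 'a \<Rightarrow> node \<Rightarrow> node \<Rightarrow> bool" where
  "rpar N B cr a u v \<longleftrightarrow> u \<in> rnodes N B cr a \<and> v \<in> rnodes N B cr a \<and> v \<noteq> cr a \<and>
     strict_anc u v \<and> \<not> (\<exists>w\<in>rnodes N B cr a. strict_anc u w \<and> strict_anc w v)"

definition rdesc :: "node set \<Rightarrow> (node \<Rightarrow> 'a list option) \<Rightarrow> ('a \<Rightarrow> node) \<Rightarrow> 'a \<Rightarrow> node \<Rightarrow> node \<Rightarrow> bool" where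
  "rdesc N B cr a = (rpar N B cr a)\<^sup>*\<^sup>*"

definition rleaf :: "node set \<Rightarrow> (node \<Rightarrow> 'a list option) \<Rightarrow> ('a \<Rightarrow> node) \<Rightarrow> 'a \<Rightarrow> node \<Rightarrow> bool" where
  "rleaf N B cr a v \<longleftrightarrow> v \<in> rnodes N B cr a \<and> \<not> (\<exists>w. rpar N B cr a v w)"

definition lwt :: "node set \<Rightarrow> (node \<Rightarrow> 'a list option) \<Rightarrow> ('a \<Rightarrow> node) \<Rightarrow> 'a \<Rightarrow> node" where
  "lwt N B cr a = Min {v. rleaf N B cr a v}"

definition rwt :: "node set \<Rightarrow> (node \<Rightarrow> 'a list option) \<Rightarrow> ('a \<Rightarrow> node) \<Rightarrow> 'a \<Rightarrow> node" where
  "rwt N B cr a = Max {v. rleaf N B cr a v}"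

definition lwing :: "node set \<Rightarrow> (node \<Rightarrow> 'a list option) \<Rightarrow> ('a \<Rightarrow> node) \<Rightarrow> ('a \<Rightarrow> node) \<Rightarrow> 'a \<Rightarrow> node set" where
  "lwing N B cr lhe a = {w. rdesc N B cr a (lhe a) w \<and> rdesc N B cr a w (lwt N B cr a)}"

definition rwing :: "node set \<Rightarrow> (node \<Rightarrow> 'a list option) \<Rightarrow> ('a \<Rightarrow> node) \<Rightarrow> ('a \<Rightarrow> node) \<Rightarrow> 'a \<Rightarrow> node set" where
  "rwing N B cr rhe a = {w. rdesc N B cr a (rhe a) w \<and> rdesc N B cr a w (rwt N B cr a)}"

definition quill :: "node set \<Rightarrow> (node \<Rightarrow> 'a list option) \<Rightarrow> ('a \<Rightarrow> node) \<Rightarrow> ('a \<Rightarrow> node) \<Rightarrow> ('a \<Rightarrow> node) \<Rightarrow> 'a \<Rightarrow> node \<Rightarrow> bool" where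
  "quill N B cr lhe rhe a u \<longleftrightarrow>
     (\<exists>w \<in> lwing N B cr lhe a \<union> rwing N B cr rhe a. rpar N B cr a w u) \<and>
     u \<notin> lwing N B cr lhe a \<union> rwing N B cr rhe a"

definition feather :: "node set \<Rightarrow> (node \<Rightarrow> 'a list option) \<Rightarrow> ('a \<Rightarrow> node) \<Rightarrow> ('a \<Rightarrow> node) \<Rightarrow> ('a \<Rightarrow> node) \<Rightarrow> 'a \<Rightarrow> node \<Rightarrow> bool" where
  "feather N B cr lhe rhe a v \<longleftrightarrow> rleaf N B cr a v \<and>
     ((\<exists>u. quill N B cr lhe rhe a u \<and> rdesc N B cr a (lhe a) u \<and>
           v = Max {l. rleaf N B cr a l \<and> rdesc N B cr a u l}) \<or>
      (\<exists>u. quill N B cr lhe rhe a u \<and> rdesc N B cr a (rhe a) u \<and>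
           v = Min {l. rleaf N B cr a l \<and> rdesc N B cr a u l}))"

definition followed :: "'a list \<Rightarrow> 'a \<Rightarrow> 'a \<Rightarrow> bool" where
  "followed xs x y \<longleftrightarrow> (\<exists>p q. p < q \<and> q < length xs \<and> xs!p = x \<and> xs!q = y)"

definition nested :: "'a list list \<Rightarrow> nat \<Rightarrow> 'a \<Rightarrow> 'a \<Rightarrow> bool" where
  "nested S i a b \<longleftrightarrow> (\<exists>x y. {x, y} = {a, b} \<and>
     followed (concat (take i S)) x y \<and> followed (concat (drop (Suc i) S)) y x)"

end

theory Submission
  imports Defs "HOL-Library.Sublist"
begin

(*
  (1) An invariant of derivation trees, proved by rule induction on deriv (locale tree_inv):
  the node set is a finite prefix-closed set of addresses whose leaves, read left to right,
  carry the blocks of S; the heads of a symbol a are the two children of its crown, both carry a,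
  every a-node lies below a head and above some a-leaf; and, the key clause, whenever two
  distinct symbols share a leaf v, their restricted trees are aligned along the path to v:
  either a and b have the same crown and are carried by the same nodes of that path, or one of
  them hangs below the other (the a-path to v jumps from an a-node above cr b to a node below
  cr b, from where on a and b are carried by the same nodes).  In the split step the alignment
  is inherited from the top tree (two global symbols) or from a child tree (two local symbols),
  and a global and a local symbol always produce hanging.

  (2) A local analysis at the leaf v inside tree_inv: the leaves of T|a are the a-leaves, the
  wingtips are the extreme a-leaves, and "v is neither a wingtip nor a feather" yields an
  a-quill on the path to v with an a-leaf beyond v below it.  Combining such leaves with the
  wingtips, separately for both kinds of alignment, gives nested occurrences of a and b before
  and after v, which become positions in S since leaves are listed in left-to-right order.
*)

lemma strict_anc_iff: "strict_anc u v \<longleftrightarrow> strict_prefix u v"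
  unfolding strict_anc_def strict_prefix_def prefix_def by auto

lemma append_less_append_iff: "(u @ x < u @ (y::nat list)) \<longleftrightarrow> x < y"
  by (induction u) auto

lemma strict_prefix_append_iff: "strict_prefix (u @ x) (u @ y) \<longleftrightarrow> strict_prefix x y"
  by (auto simp: strict_prefix_def)

lemma prefix_between:
  "prefix u (x::nat list) \<Longrightarrow> prefix u z \<Longrightarrow> x \<le> y \<Longrightarrow> y \<le> z \<Longrightarrow> prefix u y"
proof (induction u arbitrary: x y z)
  case Nil then show ?case by simp
next
  case (Cons c u)
  then obtain x' z' where xz: "x = c # x'" "z = c # z'" by (auto simp: prefix_def)
  show ?case
  proof (cases y)
    case Nil then show ?thesis using Cons.prems xz by simp
  next
    case (Cons d y')
    have "c = d \<and> x' \<le> y' \<and> y' \<le> z'" using Cons.prems(3,4) xz Cons by auto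
    moreover have "prefix u x'" "prefix u z'" using Cons.prems xz by auto
    ultimately have "prefix u y'" using Cons.IH by blast
    then show ?thesis using Cons \<open>c = d \<and> x' \<le> y' \<and> y' \<le> z'\<close> by simp
  qed
qed

lemma left_of_subtree: "\<not> prefix u (l::nat list) \<Longrightarrow> l < v \<Longrightarrow> prefix u v \<Longrightarrow> prefix u y \<Longrightarrow> l < y"
proof (rule ccontr)
  assume h: "\<not> l < y" "\<not> prefix u l" "l < v" "prefix u v" "prefix u y"
  have "prefix u l" by (rule prefix_between[OF h(5) h(4)]) (use h(1,3) in \<open>simp_all add: not_less less_imp_le\<close>)
  with h(2) show False ..
qed

lemma right_of_subtree: "\<not> prefix u (l::nat list) \<Longrightarrow> v < l \<Longrightarrow> prefix u v \<Longrightarrow> prefix u y \<Longrightarrow> y < l"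
proof (rule ccontr)
  assume h: "\<not> y < l" "\<not> prefix u l" "v < l" "prefix u v" "prefix u y"
  have "prefix u l" by (rule prefix_between[OF h(4) h(5)]) (use h(1,3) in \<open>simp_all add: not_less less_imp_le\<close>)
  with h(2) show False ..
qed

lemma incomparable_append_less:
  "(u::nat list) < v \<Longrightarrow> \<not> prefix u v \<Longrightarrow> u @ x < v @ y"
proof (induction u arbitrary: v)
  case Nil then show ?case by simp
next
  case (Cons c u)
  then obtain d v' where v: "v = d # v'" by (cases v) auto
  show ?case
  proof (cases "c = d")
    case True
    with Cons.prems v have "u < v'" "\<not> prefix u v'" by auto
    with Cons.IH have "u @ x < v' @ y" by blast
    with True v show ?thesis by simp
  next
    case False
    with Cons.prems v have "c < d" by auto
    with v show ?thesis by simp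
  qed
qed

lemma sibling_less: "(i::nat) < j \<Longrightarrow> prefix (u @ [i]) x \<Longrightarrow> prefix (u @ [j]) y \<Longrightarrow> x < y"
  by (auto simp: prefix_def append_less_append_iff)

lemma prefix_comparable: "prefix x v \<Longrightarrow> prefix y v \<Longrightarrow> prefix x y \<or> strict_prefix y x"
  using prefix_same_cases by (auto simp: strict_prefix_def)

lemma prefix_append_cases:
  "prefix x (u @ w) \<Longrightarrow> prefix x u \<or> (\<exists>x'. x = u @ x' \<and> x' \<noteq> [] \<and> prefix x' w)"
  by (auto simp: prefix_append)

definition addr_tree :: "node set \<Rightarrow> bool" where
  "addr_tree N \<longleftrightarrow> finite N \<and> [] \<in> N \<and> (\<forall>p q. p @ q \<in> N \<longrightarrow> p \<in> N)"

lemma addr_tree_prefix_closed: "addr_tree N \<Longrightarrow> x \<in> N \<Longrightarrow> prefix p x \<Longrightarrow> p \<in> N"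
  unfolding addr_tree_def prefix_def by blast

lemma tleaves_sub: "tleaves N \<subseteq> N"
  by (auto simp: tleaves_def)

lemma leaf_maximal: "addr_tree N \<Longrightarrow> l \<in> tleaves N \<Longrightarrow> x \<in> N \<Longrightarrow> prefix l x \<Longrightarrow> x = l"
proof (rule ccontr)
  assume h: "addr_tree N" "l \<in> tleaves N" "x \<in> N" "prefix l x" "x \<noteq> l"
  then obtain zs where "x = l @ zs" "zs \<noteq> []" by (auto simp: prefix_def)
  then obtain c r where "x = (l @ [c]) @ r" by (cases zs) auto
  then have "l @ [c] \<in> N" using h(1,3) unfolding addr_tree_def by blast
  with h(2) show False by (auto simp: tleaves_def)
qed

lemma leaf_list_props:
  assumes "finite N"
  shows "set (leaf_list N) = tleaves N" "sorted_wrt (<) (leaf_list N)" "distinct (leaf_list N)"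
proof -
  have "finite (tleaves N)" using assms finite_subset tleaves_sub by blast
  then show "set (leaf_list N) = tleaves N" unfolding leaf_list_def by simp
  show "sorted_wrt (<) (leaf_list N)" unfolding leaf_list_def by (rule strict_sorted_list_of_set)
  show "distinct (leaf_list N)" unfolding leaf_list_def by simp
qed

lemma leaf_list_eqI:
  assumes "finite N" "sorted_wrt (<) xs" "set xs = tleaves N"
  shows "leaf_list N = xs"
  using leaf_list_props[OF assms(1)] assms(2,3) strict_sorted_equal by metis

lemma leaf_list_index_less:
  assumes "finite N" "i < length (leaf_list N)" "j < length (leaf_list N)"
  shows "leaf_list N ! i < leaf_list N ! j \<longleftrightarrow> i < j"
proof
  have s: "sorted_wrt (<) (leaf_list N)" using leaf_list_props assms(1) by auto
  show "i < j \<Longrightarrow> leaf_list N ! i < leaf_list N ! j" using s assms sorted_wrt_nth_less by blast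
  assume lt: "leaf_list N ! i < leaf_list N ! j"
  show "i < j"
  proof (rule ccontr)
    assume "\<not> i < j"
    then consider "j < i" | "j = i" by linarith
    then show False
    proof cases
      case 1 then show False using lt s assms sorted_wrt_nth_less order.asym by blast
    next
      case 2 then show False using lt by simp
    qed
  qed
qed

lemma tleaves_single: "tleaves {[]} = {[]}"
  by (auto simp: tleaves_def)

lemma leaf_list_single: "leaf_list {[]} = [[]]"
  unfolding leaf_list_def tleaves_single by simp

lemma tleaves_cherry: "tleaves {[], [0], [1::nat]} = {[0], [1]}"
  by (auto simp: tleaves_def)

lemma leaf_list_cherry: "leaf_list {[], [0], [Suc 0]} = [[0], [Suc 0]]"
  using leaf_list_eqI[of "{[], [0], [1::nat]}" "[[0], [1]]"] tleaves_cherry by simp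

lemma count_list_distinct: "distinct xs \<Longrightarrow> count_list xs a \<le> 1"
  by (induction xs) auto

text \<open>A single block cannot contain a symbol twice, so it is empty.\<close>
lemma blocked_twice_single: "blocked_twice [\<beta>] \<Longrightarrow> \<beta> = []"
proof (rule ccontr)
  assume h: "blocked_twice [\<beta>]" "\<beta> \<noteq> []"
  then obtain a where "a \<in> set \<beta>" by (cases \<beta>) auto
  then have "2 \<le> count_list \<beta> a" using h(1) by (auto simp: blocked_twice_def syms_def)
  moreover have "count_list \<beta> a \<le> 1" using h(1) count_list_distinct by (auto simp: blocked_twice_def)
  ultimately show False by simp
qed

lemma blocked_twice_pair:
  assumes "blocked_twice [\<beta>1, \<beta>2]" "a \<in> syms [\<beta>1, \<beta>2]"
  shows "a \<in> set \<beta>1 \<and> a \<in> set \<beta>2"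
proof -
  have "2 \<le> count_list \<beta>1 a + count_list \<beta>2 a" using assms by (auto simp: blocked_twice_def)
  moreover have "count_list \<beta>1 a \<le> 1" "count_list \<beta>2 a \<le> 1"
    using assms(1) count_list_distinct by (auto simp: blocked_twice_def)
  ultimately have "count_list \<beta>1 a \<noteq> 0" "count_list \<beta>2 a \<noteq> 0" by auto
  then show ?thesis by (simp add: count_list_0_iff)
qed

lemma sorted_wrt_concat_idx:
  assumes "\<forall>xs\<in>set xss. sorted_wrt R xs"
    and "\<forall>i j. i < j \<longrightarrow> j < length xss \<longrightarrow> (\<forall>x\<in>set (xss!i). \<forall>y\<in>set (xss!j). R x y)"
  shows "sorted_wrt R (concat xss)"
  using assms
proof (induction xss)
  case Nil then show ?case by simp
next
  case (Cons xs xss)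
  have "sorted_wrt R (concat xss)"
  proof (rule Cons.IH)
    show "\<forall>xs\<in>set xss. sorted_wrt R xs" using Cons.prems(1) by simp
    show "\<forall>i j. i < j \<longrightarrow> j < length xss \<longrightarrow> (\<forall>x\<in>set (xss ! i). \<forall>y\<in>set (xss ! j). R x y)"
    proof (intro allI impI ballI)
      fix i j x y assume "i < j" "j < length xss" "x \<in> set (xss ! i)" "y \<in> set (xss ! j)"
      then show "R x y" using Cons.prems(2)[rule_format, of "Suc i" "Suc j"] by simp
    qed
  qed
  moreover have "\<forall>x\<in>set xs. \<forall>y\<in>set (concat xss). R x y"
  proof (intro ballI)
    fix x y assume "x \<in> set xs" "y \<in> set (concat xss)"
    then obtain zs where "zs \<in> set xss" "y \<in> set zs" by auto
    then obtain j where "j < length xss" "y \<in> set (xss!j)" by (auto simp: in_set_conv_nth)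
    then show "R x y" using Cons.prems(2)[rule_format, of 0 "Suc j"] \<open>x \<in> set xs\<close> by simp
  qed
  ultimately show ?case using Cons.prems(1) by (simp add: sorted_wrt_append)
qed

lemma concat_nth_pair:
  assumes "length xss = length yss" "\<forall>k<length xss. length (xss!k) = length (yss!k)"
    "k < length xss" "j < length (xss!k)"
  shows "\<exists>i<length (concat xss). concat xss ! i = xss!k!j \<and> concat yss ! i = yss!k!j"
  using assms
proof (induction xss arbitrary: yss k)
  case Nil then show ?case by simp
next
  case (Cons xs xss)
  then obtain ys yss' where y: "yss = ys # yss'" by (cases yss) auto
  have lxy: "length xs = length ys" using Cons.prems(2) y by auto
  show ?case
  proof (cases k)
    case 0
    then have "j < length xs" using Cons.prems by simp
    then show ?thesis using 0 y lxy by (intro exI[of _ j]) (auto simp: nth_append)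
  next
    case (Suc k')
    have "\<exists>i<length (concat xss). concat xss ! i = xss!k'!j \<and> concat yss' ! i = yss'!k'!j"
    proof (rule Cons.IH)
      show "length xss = length yss'" using Cons.prems(1) y by simp
      show "\<forall>k<length xss. length (xss ! k) = length (yss' ! k)"
        using Cons.prems(2) y by (metis Suc_less_eq length_Cons nth_Cons_Suc)
      show "k' < length xss" using Cons.prems(3) Suc by simp
      show "j < length (xss ! k')" using Cons.prems(4) Suc by simp
    qed
    then obtain i where "i < length (concat xss)" "concat xss ! i = xss!k'!j" "concat yss' ! i = yss'!k'!j" by blast
    then show ?thesis using Suc y lxy
      by (intro exI[of _ "length xs + i"]) (auto simp: nth_append)
  qed
qed

lemma UN_nth: "(\<Union>q<length xs. f (xs!q)) = (\<Union>x\<in>set xs. f x)"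
  by (fastforce simp: in_set_conv_nth)

section \<open>Alignment of two restricted trees along a path\<close>

definition shared_crown :: "node set \<Rightarrow> (node \<Rightarrow> 'a list option) \<Rightarrow> ('a \<Rightarrow> node) \<Rightarrow> 'a \<Rightarrow> 'a \<Rightarrow> node \<Rightarrow> bool" where
  "shared_crown N B cr a b v \<longleftrightarrow> cr a = cr b \<and>
     (\<forall>x. prefix x v \<longrightarrow> strict_prefix (cr a) x \<longrightarrow> (inblk N B a x \<longleftrightarrow> inblk N B b x))"

definition hangs_below :: "node set \<Rightarrow> (node \<Rightarrow> 'a list option) \<Rightarrow> ('a \<Rightarrow> node) \<Rightarrow> 'a \<Rightarrow> 'a \<Rightarrow> node \<Rightarrow> bool" where
  "hangs_below N B cr a b v \<longleftrightarrow> (\<exists>p g. strict_prefix p g \<and> prefix g v \<and> inblk N B a p \<and>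
     prefix p (cr b) \<and> strict_prefix (cr b) g \<and>
     (\<forall>x. strict_prefix p x \<longrightarrow> strict_prefix x g \<longrightarrow> \<not> inblk N B a x) \<and>
     (\<forall>x. prefix g x \<longrightarrow> prefix x v \<longrightarrow> (inblk N B a x \<longleftrightarrow> inblk N B b x)))"

definition aligned :: "node set \<Rightarrow> (node \<Rightarrow> 'a list option) \<Rightarrow> ('a \<Rightarrow> node) \<Rightarrow> 'a \<Rightarrow> 'a \<Rightarrow> node \<Rightarrow> bool" where
  "aligned N B cr a b v \<longleftrightarrow> shared_crown N B cr a b v \<or> hangs_below N B cr a b v \<or> hangs_below N B cr b a v"

section \<open>The invariant of derivation trees\<close>

locale tree_inv =
  fixes S :: "'a list list" and N :: "node set" and B :: "node \<Rightarrow> 'a list option"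
    and cr lhe rhe :: "'a \<Rightarrow> node"
  assumes addr_tree: "addr_tree N"
    and block_syms: "B p = Some \<beta> \<Longrightarrow> set \<beta> \<subseteq> syms S"
    and length_leaves: "length (leaf_list N) = length S"
    and leaf_block: "i < length S \<Longrightarrow> B (leaf_list N ! i) = Some (S!i)"
    and heads: "a \<in> syms S \<Longrightarrow>
      lhe a = cr a @ [0] \<and> rhe a = cr a @ [1] \<and> inblk N B a (lhe a) \<and> inblk N B a (rhe a)"
    and below_heads: "inblk N B a p \<Longrightarrow> prefix (cr a @ [0]) p \<or> prefix (cr a @ [1]) p"
    and above_leaf: "inblk N B a p \<Longrightarrow> \<exists>l\<in>tleaves N. prefix p l \<and> inblk N B a l"
    and aligned_at_leaf: "\<And>a b v. v \<in> tleaves N \<Longrightarrow> a \<noteq> b \<Longrightarrow>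
      inblk N B a v \<Longrightarrow> inblk N B b v \<Longrightarrow> aligned N B cr a b v"

lemma tree_inv_one:
  assumes "blocked_twice [\<beta>]"
  shows "tree_inv [\<beta>] {[]} (\<lambda>p. if p = [] then Some \<beta> else None) cr lhe rhe"
proof -
  let ?B = "\<lambda>p. if p = [] then Some \<beta> else None"
  have e: "\<beta> = []" using blocked_twice_single assms .
  have ni: "\<not> inblk {[]} ?B a p" for a p
    using e by (auto simp: inblk_def)
  show ?thesis
  proof unfold_locales
    show "addr_tree {[]}" by (simp add: addr_tree_def)
    show "length (leaf_list {[]}) = length [\<beta>]" by (simp add: leaf_list_single)
    show "?B p = Some \<beta>' \<Longrightarrow> set \<beta>' \<subseteq> syms [\<beta>]" for p \<beta>' using e by (simp split: if_splits)
    show "i < length [\<beta>] \<Longrightarrow> ?B (leaf_list {[]} ! i) = Some ([\<beta>] ! i)" for i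
      by (simp add: leaf_list_single)
    show "a \<in> syms [\<beta>] \<Longrightarrow> lhe a = cr a @ [0] \<and> rhe a = cr a @ [1] \<and>
        inblk {[]} ?B a (lhe a) \<and> inblk {[]} ?B a (rhe a)" for a
      using e by (simp add: syms_def)
  qed (use ni in blast)+
qed

lemma tree_inv_two:
  assumes "blocked_twice [\<beta>1, \<beta>2]"
    and cr: "\<forall>a\<in>syms [\<beta>1, \<beta>2]. cr a = [] \<and> lhe a = [0] \<and> rhe a = [1]"
  shows "tree_inv [\<beta>1, \<beta>2] {[], [0], [1]}
      (\<lambda>p. if p = [0] then Some \<beta>1 else if p = [1] then Some \<beta>2 else None) cr lhe rhe"
proof -
  let ?B = "(\<lambda>p. if p = [0] then Some \<beta>1 else if p = [1::nat] then Some \<beta>2 else None)"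
  let ?N = "{[], [0], [1::nat]}"
  have ib: "inblk ?N ?B a p \<longleftrightarrow> (p = [0] \<and> a \<in> set \<beta>1) \<or> (p = [1] \<and> a \<in> set \<beta>2)" for a p
    by (auto simp: inblk_def)
  have sy: "a \<in> syms [\<beta>1, \<beta>2] \<longleftrightarrow> a \<in> set \<beta>1 \<or> a \<in> set \<beta>2" for a
    by (simp add: syms_def)
  have both: "a \<in> set \<beta>1 \<longleftrightarrow> a \<in> set \<beta>2" for a
    using blocked_twice_pair[OF assms(1)] sy by blast
  show ?thesis
  proof unfold_locales
    show "addr_tree ?N" by (auto simp: addr_tree_def append_eq_Cons_conv)
  next
    fix p \<beta> assume "?B p = Some \<beta>" then show "set \<beta> \<subseteq> syms [\<beta>1, \<beta>2]"
      by (auto simp: syms_def split: if_splits)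
  next
    show "length (leaf_list ?N) = length [\<beta>1, \<beta>2]" by (simp add: leaf_list_cherry)
  next
    fix i assume "i < length [\<beta>1, \<beta>2]" then show "?B (leaf_list ?N ! i) = Some ([\<beta>1, \<beta>2] ! i)"
      by (auto simp: less_Suc_eq leaf_list_cherry)
  next
    fix a assume a: "a \<in> syms [\<beta>1, \<beta>2]"
    then have "a \<in> set \<beta>1" "a \<in> set \<beta>2" using sy both by auto
    then show "lhe a = cr a @ [0] \<and> rhe a = cr a @ [1] \<and> inblk ?N ?B a (lhe a) \<and> inblk ?N ?B a (rhe a)"
      using cr a ib by auto
  next
    fix a p assume "inblk ?N ?B a p"
    then have "a \<in> syms [\<beta>1, \<beta>2]" "p = [0] \<or> p = [1]" using ib sy by auto
    then show "prefix (cr a @ [0]) p \<or> prefix (cr a @ [1]) p" using cr by auto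
  next
    fix a p assume h: "inblk ?N ?B a p"
    then have "p \<in> tleaves ?N" using ib tleaves_cherry by auto
    then show "\<exists>l\<in>tleaves ?N. prefix p l \<and> inblk ?N ?B a l" using h by blast
  next
    fix a b v assume v: "v \<in> tleaves ?N" "inblk ?N ?B a v" "inblk ?N ?B b v"
    then have "cr a = []" "cr b = []" using ib sy cr by auto
    moreover have "v = [0] \<or> v = [1]" using v tleaves_cherry by auto
    ultimately have "shared_crown ?N ?B cr a b v"
      unfolding shared_crown_def using v by (auto simp: prefix_Cons strict_prefix_def)
    then show "aligned ?N ?B cr a b v" by (simp add: aligned_def)
  qed
qed

section \<open>The split step preserves the invariant\<close>

text \<open>The data of one application of the split rule of deriv: S is cut into the parts Ss, Sh is
  the sequence of global-symbol blocks with derivation tree (Nh, Bh), and the q-th part with global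
  symbols removed has derivation tree (Nc q, Bc q), glued below the q-th leaf L q of Nh.\<close>
locale split_step =
  fixes S :: "'a list list" and Ss :: "'a list list list" and Sh :: "'a list list"
    and Nh :: "node set" and Bh :: "node \<Rightarrow> 'a list option" and crh lheh rheh :: "'a \<Rightarrow> node"
    and Nc :: "nat \<Rightarrow> node set" and Bc :: "nat \<Rightarrow> node \<Rightarrow> 'a list option"
    and crc lhec rhec :: "nat \<Rightarrow> 'a \<Rightarrow> node"
    and N :: "node set" and B :: "node \<Rightarrow> 'a list option" and cr lhe rhe :: "'a \<Rightarrow> node"
  assumes cc: "concat Ss = S"
    and lsh: "length Sh = length Ss"
    and shq: "\<forall>q<length Ss. distinct (Sh!q) \<and> set (Sh!q) = {a\<in>syms (Ss!q). is_global Ss a}"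
    and top_inv: "tree_inv Sh Nh Bh crh lheh rheh"
    and children_inv: "\<forall>q<length Ss. tree_inv (map (filter (\<lambda>a. \<not> is_global Ss a)) (Ss!q))
                         (Nc q) (Bc q) (crc q) (lhec q) (rhec q)"
    and llh: "length (leaf_list Nh) = length Ss"
    and Ndef: "N = Nh \<union> (\<Union>q<length Ss. (\<lambda>w. leaf_list Nh ! q @ w) ` Nc q)"
    and lln: "length (leaf_list N) = length S"
    and Bnone: "\<forall>p. p \<notin> N \<longrightarrow> B p = None"
    and Bleaf: "\<forall>i<length S. B (leaf_list N ! i) = Some (S!i)"
    and BBh: "\<forall>p\<in>Nh. p \<notin> tleaves N \<longrightarrow> B p = Bh p"
    and BBc: "\<forall>q<length Ss. \<forall>w\<in>Nc q. w \<noteq> [] \<and> leaf_list Nh ! q @ w \<notin> tleaves N \<longrightarrow>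
        B (leaf_list Nh ! q @ w) = Bc q w"
    and crg: "\<forall>a\<in>syms S. is_global Ss a \<longrightarrow> cr a = crh a \<and> lhe a = lheh a \<and> rhe a = rheh a"
    and crl: "\<forall>q<length Ss. \<forall>a\<in>syms (Ss!q). \<not> is_global Ss a \<longrightarrow>
        cr a = leaf_list Nh ! q @ crc q a \<and> lhe a = leaf_list Nh ! q @ lhec q a \<and>
        rhe a = leaf_list Nh ! q @ rhec q a"
begin

abbreviation "m \<equiv> length Ss"
abbreviation "L q \<equiv> leaf_list Nh ! q"
abbreviation "glob \<equiv> is_global Ss"
abbreviation "Sc q \<equiv> map (filter (\<lambda>a. \<not> is_global Ss a)) (Ss!q)"

sublocale top_tree: tree_inv Sh Nh Bh crh lheh rheh
  by (rule top_inv)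

lemma child_inv: "q < m \<Longrightarrow> tree_inv (Sc q) (Nc q) (Bc q) (crc q) (lhec q) (rhec q)"
  using children_inv by blast

lemmas child_addr_tree = tree_inv.addr_tree[OF child_inv]
  and child_block_syms = tree_inv.block_syms[OF child_inv]
  and child_length_leaves = tree_inv.length_leaves[OF child_inv]
  and child_leaf_blocks = tree_inv.leaf_block[OF child_inv]
  and child_heads = tree_inv.heads[OF child_inv]
  and child_below_heads = tree_inv.below_heads[OF child_inv]
  and child_above_leaf = tree_inv.above_leaf[OF child_inv]
  and child_aligned_at_leaf = tree_inv.aligned_at_leaf[OF child_inv]

lemma finite_Nh: "finite Nh" using top_tree.addr_tree by (simp add: addr_tree_def)

lemma L_leaf: "q < m \<Longrightarrow> L q \<in> tleaves Nh"
  using leaf_list_props(1)[OF finite_Nh] llh by (metis nth_mem)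

lemma L_node: "q < m \<Longrightarrow> L q \<in> Nh" using L_leaf tleaves_sub by blast

lemma L_inj: "q < m \<Longrightarrow> q' < m \<Longrightarrow> L q = L q' \<Longrightarrow> q = q'"
  using leaf_list_props(3)[OF finite_Nh] llh by (simp add: nth_eq_iff_index_eq)

lemma leaf_is_L: "x \<in> tleaves Nh \<Longrightarrow> \<exists>q<m. x = L q"
  using leaf_list_props(1)[OF finite_Nh] llh by (metis in_set_conv_nth)

lemma L_prefix_eq: "q < m \<Longrightarrow> q' < m \<Longrightarrow> prefix (L q) (L q') \<Longrightarrow> q = q'"
  using leaf_maximal[OF top_tree.addr_tree L_leaf L_node] L_inj by metis

lemma L_common_prefix: "q < m \<Longrightarrow> q' < m \<Longrightarrow> prefix (L q) x \<Longrightarrow> prefix (L q') x \<Longrightarrow> q = q'"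
  using L_prefix_eq prefix_same_cases by metis

lemma L_mono: "q < q' \<Longrightarrow> q' < m \<Longrightarrow> L q < L q'"
  using leaf_list_props(2)[OF finite_Nh] llh sorted_wrt_nth_less by (metis order.strict_trans)

lemma top_node_below_L: "q < m \<Longrightarrow> x \<in> Nh \<Longrightarrow> prefix (L q) x \<Longrightarrow> x = L q"
  using leaf_maximal[OF top_tree.addr_tree L_leaf] by blast

lemma node_cases: "x \<in> N \<Longrightarrow> x \<in> Nh \<or> (\<exists>q<m. \<exists>w\<in>Nc q. x = L q @ w)"
  using Ndef by auto

lemma node_below_L_iff: assumes "q < m" shows "L q @ w \<in> N \<longleftrightarrow> w \<in> Nc q"
proof
  assume "w \<in> Nc q" then show "L q @ w \<in> N" using Ndef assms by auto
next
  assume "L q @ w \<in> N"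
  then consider "L q @ w \<in> Nh" | q' w' where "q' < m" "w' \<in> Nc q'" "L q @ w = L q' @ w'"
    using node_cases by blast
  then show "w \<in> Nc q"
  proof cases
    case 1
    then have "L q @ w = L q" using top_node_below_L[OF assms 1] by (simp add: prefix_def)
    then have "w = []" by simp
    then show ?thesis using child_addr_tree[OF assms] by (simp add: addr_tree_def)
  next
    case 2
    have "prefix (L q) (L q @ w)" by simp
    moreover have "prefix (L q') (L q @ w)" using 2(3) by simp
    ultimately have "q = q'" using L_common_prefix assms 2 by blast
    with 2 show ?thesis by simp
  qed
qed

lemma addr_tree_N: "addr_tree N"
  unfolding addr_tree_def
proof (intro conjI allI impI)
  show "finite N" using Ndef finite_Nh child_addr_tree by (auto simp: addr_tree_def)
  show "[] \<in> N" using Ndef top_tree.addr_tree by (auto simp: addr_tree_def)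
  fix p r assume "p @ r \<in> N"
  then consider "p @ r \<in> Nh" | q w where "q < m" "w \<in> Nc q" "p @ r = L q @ w"
    using node_cases by blast
  then show "p \<in> N"
  proof cases
    case 1 then show ?thesis using top_tree.addr_tree Ndef by (auto simp: addr_tree_def)
  next
    case 2
    then obtain us where "p = L q @ us \<and> us @ r = w \<or> p @ us = L q \<and> r = us @ w"
      by (auto simp: append_eq_append_conv2)
    then show ?thesis
    proof
      assume "p = L q @ us \<and> us @ r = w"
      then have "us \<in> Nc q" using child_addr_tree[OF 2(1)] 2(2) by (auto simp: addr_tree_def)
      then show ?thesis using node_below_L_iff 2(1) \<open>p = L q @ us \<and> us @ r = w\<close> by auto
    next
      assume "p @ us = L q \<and> r = us @ w"
      then have "p @ us \<in> Nh" using L_node[OF 2(1)] by simp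
      then have "p \<in> Nh" using top_tree.addr_tree unfolding addr_tree_def by blast
      then show ?thesis using Ndef by auto
    qed
  qed
qed

lemma finite_N: "finite N" using addr_tree_N by (simp add: addr_tree_def)

lemma leaves_N_iff: "x \<in> tleaves N \<longleftrightarrow> (\<exists>q<m. \<exists>w\<in>tleaves (Nc q). x = L q @ w)"
proof
  assume x: "x \<in> tleaves N"
  then have xN: "x \<in> N" "\<forall>c. x @ [c] \<notin> N" by (auto simp: tleaves_def)
  consider "x \<in> Nh" | q w where "q < m" "w \<in> Nc q" "x = L q @ w" using node_cases xN by blast
  then show "\<exists>q<m. \<exists>w\<in>tleaves (Nc q). x = L q @ w"
  proof cases
    case 1
    then have "x \<in> tleaves Nh" using xN Ndef by (auto simp: tleaves_def)
    then obtain q where q: "q < m" "x = L q" using leaf_is_L by blast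
    have "[] \<in> tleaves (Nc q)"
      using child_addr_tree[OF q(1)] xN q node_below_L_iff[OF q(1)] by (auto simp: tleaves_def addr_tree_def)
    then show ?thesis using q by (intro exI[of _ q]) (auto intro: bexI[of _ "[]"])
  next
    case 2
    then have "w \<in> tleaves (Nc q)" using xN node_below_L_iff[OF 2(1)] by (auto simp: tleaves_def)
    then show ?thesis using 2 by blast
  qed
next
  assume "\<exists>q<m. \<exists>w\<in>tleaves (Nc q). x = L q @ w"
  then obtain q w where q: "q < m" "w \<in> tleaves (Nc q)" "x = L q @ w" by blast
  then have "x \<in> N" using node_below_L_iff tleaves_sub by blast
  moreover have "x @ [c] \<notin> N" for c using q node_below_L_iff[OF q(1), of "w @ [c]"] by (auto simp: tleaves_def)
  ultimately show "x \<in> tleaves N" by (simp add: tleaves_def)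
qed

lemma below_L_unique: "q < m \<Longrightarrow> q' < m \<Longrightarrow> L q @ w = L q' @ w' \<Longrightarrow> q = q' \<and> w = w'"
proof -
  assume h: "q < m" "q' < m" "L q @ w = L q' @ w'"
  have "prefix (L q) (L q @ w)" by simp
  moreover have "prefix (L q') (L q @ w)" by (simp add: h(3))
  ultimately have "q = q'" using L_common_prefix h by blast
  with h show ?thesis by simp
qed

lemma leaf_below_L_iff: assumes "q < m" shows "L q @ w \<in> tleaves N \<longleftrightarrow> w \<in> tleaves (Nc q)"
  using leaves_N_iff below_L_unique assms by metis

definition part_leaves :: "nat \<Rightarrow> node list" where "part_leaves q = map ((@) (L q)) (leaf_list (Nc q))"

lemma leaf_list_N: "leaf_list N = concat (map part_leaves [0..<m])"
proof (rule leaf_list_eqI[OF finite_N])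
  show "sorted_wrt (<) (concat (map part_leaves [0..<m]))"
  proof (rule sorted_wrt_concat_idx)
    show "\<forall>xs\<in>set (map part_leaves [0..<m]). sorted_wrt (<) xs"
    proof
      fix xs assume "xs \<in> set (map part_leaves [0..<m])"
      then obtain q where q: "q < m" "xs = part_leaves q" by auto
      have "sorted_wrt (<) (leaf_list (Nc q))" using leaf_list_props(2) child_addr_tree[OF q(1)] by (simp add: addr_tree_def)
      then show "sorted_wrt (<) xs" unfolding q part_leaves_def by (simp add: sorted_wrt_map append_less_append_iff)
    qed
    show "\<forall>i j. i < j \<longrightarrow> j < length (map part_leaves [0..<m]) \<longrightarrow>
        (\<forall>x\<in>set (map part_leaves [0..<m] ! i). \<forall>y\<in>set (map part_leaves [0..<m] ! j). x < y)"
    proof (intro allI impI ballI)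
      fix i j x y assume ij: "i < j" "j < length (map part_leaves [0..<m])"
        "x \<in> set (map part_leaves [0..<m] ! i)" "y \<in> set (map part_leaves [0..<m] ! j)"
      then have "j < m" by simp
      with ij obtain w w' where "x = L i @ w" "y = L j @ w'" by (auto simp: part_leaves_def)
      moreover have "L i < L j" using L_mono ij \<open>j < m\<close> by blast
      moreover have "\<not> prefix (L i) (L j)"
      proof
        assume "prefix (L i) (L j)"
        then have "i = j" using L_prefix_eq ij \<open>j < m\<close> by (meson order.strict_trans)
        with ij show False by simp
      qed
      ultimately show "x < y" using incomparable_append_less by blast
    qed
  qed
  show "set (concat (map part_leaves [0..<m])) = tleaves N"
  proof -
    have "set (concat (map part_leaves [0..<m])) = (\<Union>q<m. (\<lambda>w. L q @ w) ` tleaves (Nc q))"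
      using leaf_list_props(1) child_addr_tree by (auto simp: part_leaves_def addr_tree_def)
    also have "\<dots> = tleaves N" using leaves_N_iff by blast
    finally show ?thesis .
  qed
qed

lemma length_child_leaves: "q < m \<Longrightarrow> length (leaf_list (Nc q)) = length (Ss!q)"
  using child_length_leaves by simp

lemma block_at_child_leaf: assumes "q < m" "j < length (Ss!q)"
  shows "B (L q @ leaf_list (Nc q) ! j) = Some (Ss!q!j)"
proof -
  have "\<exists>i<length (concat (map part_leaves [0..<m])). concat (map part_leaves [0..<m]) ! i = map part_leaves [0..<m] ! q ! j \<and> concat Ss ! i = Ss ! q ! j"
  proof (rule concat_nth_pair)
    show "length (map part_leaves [0..<m]) = length Ss" by simp
    show "\<forall>k<length (map part_leaves [0..<m]). length (map part_leaves [0..<m] ! k) = length (Ss ! k)"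
      using length_child_leaves by (simp add: part_leaves_def)
    show "q < length (map part_leaves [0..<m])" using assms by simp
    show "j < length (map part_leaves [0..<m] ! q)" using assms length_child_leaves by (simp add: part_leaves_def)
  qed
  then obtain i where i: "i < length (leaf_list N)" "leaf_list N ! i = L q @ leaf_list (Nc q) ! j" "S ! i = Ss!q!j"
    using leaf_list_N cc assms length_child_leaves by (auto simp: part_leaves_def)
  then show ?thesis using Bleaf lln by metis
qed

lemma child_leaf_block: assumes "q < m" "w \<in> tleaves (Nc q)"
  shows "\<exists>j<length (Ss!q). w = leaf_list (Nc q) ! j \<and> B (L q @ w) = Some (Ss!q!j) \<and>
           Bc q w = Some (filter (\<lambda>a. \<not> glob a) (Ss!q!j))"
proof -
  have "w \<in> set (leaf_list (Nc q))" using leaf_list_props(1) child_addr_tree[OF assms(1)] assms(2) by (simp add: addr_tree_def)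
  then obtain j where j: "j < length (leaf_list (Nc q))" "w = leaf_list (Nc q) ! j" by (auto simp: in_set_conv_nth)
  then have j2: "j < length (Ss!q)" using length_child_leaves assms by simp
  have "Bc q w = Some (Sc q ! j)" using child_leaf_blocks[OF assms(1)] j j2 by simp
  then show ?thesis using block_at_child_leaf[OF assms(1) j2] j j2 by auto
qed

lemma syms_parts: "syms S = (\<Union>q<m. syms (Ss!q))"
  unfolding UN_nth unfolding syms_def cc[symmetric] by simp

lemma block_syms_part: "q < m \<Longrightarrow> j < length (Ss!q) \<Longrightarrow> a \<in> set (Ss!q!j) \<Longrightarrow> a \<in> syms (Ss!q)"
proof -
  assume "j < length (Ss!q)" "a \<in> set (Ss!q!j)"
  moreover have "Ss!q!j \<in> set (Ss!q)" using \<open>j < length (Ss!q)\<close> by (rule nth_mem)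
  ultimately show ?thesis unfolding syms_def by auto
qed

lemma global_in_top: "glob a \<Longrightarrow> q < m \<Longrightarrow> a \<in> syms (Ss!q) \<Longrightarrow> a \<in> set (Sh!q)"
  using shq by blast

lemma top_global: "q < length Sh \<Longrightarrow> a \<in> set (Sh!q) \<Longrightarrow> glob a \<and> a \<in> syms (Ss!q)"
  using shq lsh by auto

lemma syms_top_global: "a \<in> syms Sh \<Longrightarrow> glob a"
proof -
  assume "a \<in> syms Sh"
  then obtain x where "x \<in> set Sh" "a \<in> set x" unfolding syms_def by auto
  then obtain q where "q < length Sh" "Sh!q = x" by (meson in_set_conv_nth)
  then show ?thesis using top_global \<open>a \<in> set x\<close> by blast
qed

lemma syms_child: "q < m \<Longrightarrow> a \<in> syms (Sc q) \<Longrightarrow> \<not> glob a \<and> a \<in> syms (Ss!q)"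
  unfolding syms_def by auto

lemma global_syms: "glob a \<Longrightarrow> a \<in> syms S"
  unfolding is_global_def syms_parts by blast

lemma global_syms_top: "glob a \<Longrightarrow> a \<in> syms Sh"
proof -
  assume g: "glob a"
  then obtain q where q: "q < m" "a \<in> syms (Ss!q)" unfolding is_global_def by blast
  then have "a \<in> set (Sh!q)" using global_in_top g by blast
  moreover have "Sh!q \<in> set Sh" using q lsh by simp
  ultimately show ?thesis unfolding syms_def by auto
qed

lemma local_syms_child: "\<not> glob a \<Longrightarrow> q < m \<Longrightarrow> a \<in> syms (Ss!q) \<Longrightarrow> a \<in> syms (Sc q)"
  unfolding syms_def by auto

lemma block_at_internal_L: "q < m \<Longrightarrow> L q \<notin> tleaves N \<Longrightarrow> B (L q) = Some (Sh!q)"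
  using BBh L_node top_tree.leaf_block lsh by auto

lemma child_trivial: assumes "q < m" "[] \<in> tleaves (Nc q)" shows "Nc q = {[]}"
proof -
  have t: "addr_tree (Nc q)" using child_addr_tree[OF assms(1)] .
  { fix w assume "w \<in> Nc q" "w \<noteq> []"
    then obtain c r where "w = [c] @ r" by (cases w) auto
    then have "[c] \<in> Nc q" using t \<open>w \<in> Nc q\<close> unfolding addr_tree_def by blast
    with assms(2) have False by (auto simp: tleaves_def) }
  moreover have "[] \<in> Nc q" using t by (simp add: addr_tree_def)
  ultimately show ?thesis by blast
qed

lemma inblk_top_node: assumes "glob s" "x \<in> Nh" shows "inblk N B s x \<longleftrightarrow> inblk Nh Bh s x"
proof (cases "x \<in> tleaves N")
  case False
  then show ?thesis using BBh assms(2) Ndef by (auto simp: inblk_def)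
next
  case True
  then obtain q w where q: "q < m" "w \<in> tleaves (Nc q)" "x = L q @ w" using leaves_N_iff by blast
  have "prefix (L q) x" using q(3) by simp
  then have "x = L q" using top_node_below_L[OF q(1) assms(2)] by blast
  then have w: "w = []" using q by simp
  then have nc: "Nc q = {[]}" using child_trivial q by blast
  then have l1: "length (Ss!q) = 1" using length_child_leaves[OF q(1)] leaf_list_single by simp
  then have sq: "Ss!q = [Ss!q!0]" by (cases "Ss!q") auto
  obtain j where j: "j < length (Ss!q)" "B (L q @ w) = Some (Ss!q!j)" using child_leaf_block q by blast
  then have j0: "j = 0" using l1 by simp
  have "Bh (L q) = Some (Sh!q)" using top_tree.leaf_block lsh q by simp
  moreover have "s \<in> set (Sh!q) \<longleftrightarrow> s \<in> set (Ss!q!0)"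
    using shq q assms(1) sq by (metis (no_types, lifting) concat.simps list.simps(15) mem_Collect_eq
          self_append_conv syms_def concat.simps(1))
  ultimately show ?thesis using j j0 w \<open>x = L q\<close> assms(2) Ndef by (auto simp: inblk_def)
qed

lemma global_not_child_internal: assumes "glob s" "q < m" "w \<in> Nc q" "w \<noteq> []" "w \<notin> tleaves (Nc q)"
  shows "\<not> inblk N B s (L q @ w)"
proof
  assume "inblk N B s (L q @ w)"
  then obtain \<beta> where b: "B (L q @ w) = Some \<beta>" "s \<in> set \<beta>" by (auto simp: inblk_def)
  have "L q @ w \<notin> tleaves N" using leaf_below_L_iff assms by blast
  then have "B (L q @ w) = Bc q w" using BBc assms by blast
  then have "set \<beta> \<subseteq> syms (Sc q)" using child_block_syms[OF assms(2)] b by auto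
  then show False using syms_child assms b by blast
qed

lemma global_leaf_top: assumes "glob s" "q < m" "w \<in> tleaves (Nc q)" "inblk N B s (L q @ w)"
  shows "inblk Nh Bh s (L q)"
proof -
  obtain j where j: "j < length (Ss!q)" "B (L q @ w) = Some (Ss!q!j)" using child_leaf_block assms by blast
  then have "s \<in> set (Ss!q!j)" using assms(4) by (auto simp: inblk_def)
  then have "s \<in> set (Sh!q)" using block_syms_part global_in_top assms j by blast
  then show ?thesis using top_tree.leaf_block lsh assms L_node by (auto simp: inblk_def)
qed

lemma inblk_local: assumes "\<not> glob s" "q < m"
  shows "inblk N B s (L q @ w) \<longleftrightarrow> inblk (Nc q) (Bc q) s w"
proof (cases "w \<in> Nc q")
  case False
  then show ?thesis using node_below_L_iff[OF assms(2)] by (auto simp: inblk_def)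
next
  case w: True
  show ?thesis
  proof (cases "w \<in> tleaves (Nc q)")
    case True
    then obtain j where j: "j < length (Ss!q)" "B (L q @ w) = Some (Ss!q!j)"
        "Bc q w = Some (filter (\<lambda>a. \<not> glob a) (Ss!q!j))" using child_leaf_block assms by blast
    then show ?thesis using w assms node_below_L_iff by (auto simp: inblk_def)
  next
    case nl: False
    show ?thesis
    proof (cases "w = []")
      case False
      have "L q @ w \<notin> tleaves N" using leaf_below_L_iff assms nl by blast
      then have "B (L q @ w) = Bc q w" using BBc assms w False by blast
      then show ?thesis using w node_below_L_iff assms by (auto simp: inblk_def)
    next
      case True
      have "L q \<notin> tleaves N" using leaf_below_L_iff[OF assms(2), of "[]"] nl True by simp
      then have "B (L q) = Some (Sh!q)" using block_at_internal_L assms by blast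
      then have "\<not> inblk N B s (L q)" using top_global lsh assms by (auto simp: inblk_def)
      moreover have "\<not> inblk (Nc q) (Bc q) s []"
      proof
        assume "inblk (Nc q) (Bc q) s []"
        then have "prefix (crc q s @ [0]) [] \<or> prefix (crc q s @ [1]) []" using child_below_heads[OF assms(2)] by blast
        then show False by simp
      qed
      ultimately show ?thesis using True by simp
    qed
  qed
qed

lemma local_inblk_cases: assumes "\<not> glob s" "inblk N B s x"
  shows "\<exists>q<m. \<exists>w. x = L q @ w \<and> inblk (Nc q) (Bc q) s w \<and> s \<in> syms (Ss!q)"
proof -
  have xN: "x \<in> N" using assms(2) by (simp add: inblk_def)
  have "\<exists>q<m. \<exists>w. x = L q @ w"
  proof (cases "x \<in> Nh")
    case True
    show ?thesis
    proof (cases "x \<in> tleaves N")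
      case True then show ?thesis using leaves_N_iff by blast
    next
      case False
      then have "B x = Bh x" using BBh \<open>x \<in> Nh\<close> by blast
      then obtain \<beta> where "Bh x = Some \<beta>" "s \<in> set \<beta>" using assms(2) by (auto simp: inblk_def)
      then have "s \<in> syms Sh" using top_tree.block_syms by blast
      then show ?thesis using syms_top_global assms(1) by blast
    qed
  next
    case False then show ?thesis using node_cases xN by blast
  qed
  then obtain q w where q: "q < m" "x = L q @ w" by blast
  then have "inblk (Nc q) (Bc q) s w" using inblk_local assms by blast
  moreover then have "s \<in> syms (Sc q)" using child_block_syms[OF q(1)] by (auto simp: inblk_def)
  ultimately show ?thesis using q syms_child by blast
qed

lemma global_inblk_cases: assumes "glob s" "inblk N B s x"
  shows "x \<in> Nh \<or> (\<exists>q<m. \<exists>w\<in>tleaves (Nc q). w \<noteq> [] \<and> x = L q @ w)"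
proof -
  have xN: "x \<in> N" using assms(2) by (simp add: inblk_def)
  show ?thesis
  proof (cases "x \<in> Nh")
    case False
    then obtain q w where q: "q < m" "w \<in> Nc q" "x = L q @ w" using node_cases xN by blast
    then have "w \<noteq> []" using False L_node by auto
    moreover then have "w \<in> tleaves (Nc q)" using global_not_child_internal assms q by blast
    ultimately show ?thesis using q by blast
  qed simp
qed

lemma inblk_syms: "inblk N B a p \<Longrightarrow> a \<in> syms S"
proof -
  assume h: "inblk N B a p"
  then obtain \<beta> where b: "B p = Some \<beta>" "a \<in> set \<beta>" by (auto simp: inblk_def)
  have pN: "p \<in> N" using h by (simp add: inblk_def)
  show ?thesis
  proof (cases "p \<in> tleaves N")
    case True
    then obtain i where "i < length (leaf_list N)" "p = leaf_list N ! i"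
      using leaf_list_props(1)[OF finite_N] by (metis in_set_conv_nth)
    then have "B p = Some (S!i)" "i < length S" using Bleaf lln by auto
    then show ?thesis using b unfolding syms_def by (auto dest: nth_mem)
  next
    case False
    show ?thesis
    proof (cases "p \<in> Nh")
      case True
      then have "Bh p = Some \<beta>" using BBh False b by auto
      then have "a \<in> syms Sh" using top_tree.block_syms b by blast
      then show ?thesis using syms_top_global global_syms by blast
    next
      case nh: False
      then obtain q w where q: "q < m" "w \<in> Nc q" "p = L q @ w" using node_cases pN by blast
      then have "w \<noteq> []" using nh L_node by auto
      then have "Bc q w = Some \<beta>" using BBc q False b by auto
      then have "a \<in> syms (Sc q)" using child_block_syms[OF q(1)] b by blast
      then show ?thesis using syms_child q syms_parts by blast
    qed
  qed
qed

lemma global_on_path: assumes "glob s" "q < m" "w \<in> tleaves (Nc q)" "inblk N B s (L q @ w)" "prefix x (L q @ w)"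
  shows "inblk N B s x \<longleftrightarrow> (if prefix x (L q) then inblk Nh Bh s x else x = L q @ w)"
proof (cases "prefix x (L q)")
  case True
  then have "x \<in> Nh" using addr_tree_prefix_closed[OF top_tree.addr_tree L_node[OF assms(2)]] by blast
  then show ?thesis using inblk_top_node assms True by simp
next
  case False
  then obtain x' where x': "x = L q @ x'" "x' \<noteq> []" "prefix x' w" using prefix_append_cases assms(5) by blast
  show ?thesis
  proof (cases "x' = w")
    case True then show ?thesis using False assms x' by simp
  next
    case ne: False
    have wN: "w \<in> Nc q" using assms(3) tleaves_sub by blast
    have "x' \<in> Nc q" using addr_tree_prefix_closed[OF child_addr_tree[OF assms(2)] wN x'(3)] .
    moreover have "x' \<notin> tleaves (Nc q)" using leaf_maximal[OF child_addr_tree[OF assms(2)] _ wN x'(3)] ne by blast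
    ultimately have "\<not> inblk N B s x" using global_not_child_internal assms x' by blast
    then show ?thesis using False x' ne by simp
  qed
qed

lemma hangs_below_local: assumes "\<not> glob a" "\<not> glob b" "q < m" "a \<in> syms (Ss!q)" "b \<in> syms (Ss!q)"
    "hangs_below (Nc q) (Bc q) (crc q) a b w"
  shows "hangs_below N B cr a b (L q @ w)"
proof -
  have ca: "cr a = L q @ crc q a" and cb: "cr b = L q @ crc q b" using crl assms by auto
  obtain p g where pg: "strict_prefix p g" "prefix g w" "inblk (Nc q) (Bc q) a p"
     "prefix p (crc q b)" "strict_prefix (crc q b) g"
     "\<forall>x. strict_prefix p x \<longrightarrow> strict_prefix x g \<longrightarrow> \<not> inblk (Nc q) (Bc q) a x"
     "\<forall>x. prefix g x \<longrightarrow> prefix x w \<longrightarrow> (inblk (Nc q) (Bc q) a x \<longleftrightarrow> inblk (Nc q) (Bc q) b x)"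
    using assms(6) unfolding hangs_below_def by blast
  show ?thesis unfolding hangs_below_def
  proof (rule exI[of _ "L q @ p"], rule exI[of _ "L q @ g"], intro conjI allI impI)
    show "strict_prefix (L q @ p) (L q @ g)" using pg(1) strict_prefix_append_iff by blast
    show "prefix (L q @ g) (L q @ w)" using pg(2) by simp
    show "inblk N B a (L q @ p)" using pg(3) inblk_local assms by blast
    show "prefix (L q @ p) (cr b)" using pg(4) cb by simp
    show "strict_prefix (cr b) (L q @ g)" using pg(5) cb strict_prefix_append_iff by metis
  next
    fix x assume h: "strict_prefix (L q @ p) x" "strict_prefix x (L q @ g)"
    then obtain x' where "x = L q @ x'" by (auto simp: strict_prefix_def prefix_def)
    then show "\<not> inblk N B a x" using h pg(6) inblk_local assms strict_prefix_append_iff by metis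
  next
    fix x assume h: "prefix (L q @ g) x" "prefix x (L q @ w)"
    then obtain x' where x': "x = L q @ x'" by (auto simp: prefix_def)
    then have "prefix g x'" "prefix x' w" using h by auto
    then show "inblk N B a x \<longleftrightarrow> inblk N B b x" using pg(7) inblk_local assms x' by metis
  qed
qed

lemma aligned_local: assumes "\<not> glob a" "\<not> glob b" "q < m" "a \<in> syms (Ss!q)" "b \<in> syms (Ss!q)"
    "aligned (Nc q) (Bc q) (crc q) a b w"
  shows "aligned N B cr a b (L q @ w)"
proof -
  have ca: "cr a = L q @ crc q a" and cb: "cr b = L q @ crc q b" using crl assms by auto
  consider "shared_crown (Nc q) (Bc q) (crc q) a b w" | "hangs_below (Nc q) (Bc q) (crc q) a b w" | "hangs_below (Nc q) (Bc q) (crc q) b a w"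
    using assms(6) unfolding aligned_def by blast
  then show ?thesis
  proof cases
    case 1
    have "shared_crown N B cr a b (L q @ w)" unfolding shared_crown_def
    proof (intro conjI allI impI)
      show "cr a = cr b" using 1 ca cb by (simp add: shared_crown_def)
      fix x assume h: "prefix x (L q @ w)" "strict_prefix (cr a) x"
      then obtain x' where x': "x = L q @ x'" using ca by (auto simp: strict_prefix_def prefix_def)
      then have "prefix x' w" "strict_prefix (crc q a) x'" using h ca strict_prefix_append_iff by auto
      then show "inblk N B a x \<longleftrightarrow> inblk N B b x" using 1 inblk_local assms x' unfolding shared_crown_def by metis
    qed
    then show ?thesis by (simp add: aligned_def)
  next
    case 2 then show ?thesis using hangs_below_local assms by (simp add: aligned_def)
  next
    case 3 then show ?thesis using hangs_below_local assms by (simp add: aligned_def)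
  qed
qed

lemma hangs_below_global:
  assumes "glob x" "glob y" "q < m" "w \<in> tleaves (Nc q)"
    "inblk N B x (L q @ w)" "inblk N B y (L q @ w)" "hangs_below Nh Bh crh x y (L q)"
  shows "hangs_below N B cr x y (L q @ w)"
proof -
  have cy: "cr y = crh y" using crg assms(2) global_syms by auto
  have P: "inblk N B s z \<longleftrightarrow> (if prefix z (L q) then inblk Nh Bh s z else z = L q @ w)"
    if "s = x \<or> s = y" "prefix z (L q @ w)" for s z
    using global_on_path that assms by blast
  obtain p g where pg: "strict_prefix p g" "prefix g (L q)" "inblk Nh Bh x p"
   "prefix p (crh y)" "strict_prefix (crh y) g"
   "\<forall>z. strict_prefix p z \<longrightarrow> strict_prefix z g \<longrightarrow> \<not> inblk Nh Bh x z"
   "\<forall>z. prefix g z \<longrightarrow> prefix z (L q) \<longrightarrow> (inblk Nh Bh x z \<longleftrightarrow> inblk Nh Bh y z)"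
    using assms(7) unfolding hangs_below_def by blast
  have gv: "prefix g (L q @ w)" using pg(2) prefix_prefix by blast
  show ?thesis unfolding hangs_below_def
  proof (rule exI[of _ p], rule exI[of _ g], intro conjI allI impI)
    show "strict_prefix p g" "prefix g (L q @ w)" using pg(1) gv by auto
    have "prefix p (L q)" using pg(1,2) by (meson prefix_order.dual_order.trans strict_prefix_def)
    then show "inblk N B x p" using P[of x p] pg(3) by auto
    show "prefix p (cr y)" "strict_prefix (cr y) g" using pg cy by auto
  next
    fix z assume h: "strict_prefix p z" "strict_prefix z g"
    then have "prefix z (L q)" using pg(2) by (meson prefix_order.dual_order.trans strict_prefix_def)
    then show "\<not> inblk N B x z" using P[of x z] pg(6) h by auto
  next
    fix z assume h: "prefix g z" "prefix z (L q @ w)"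
    show "inblk N B x z \<longleftrightarrow> inblk N B y z"
    proof (cases "prefix z (L q)")
      case True then show ?thesis using P[of x z] P[of y z] pg(7) h by auto
    next
      case False then show ?thesis using P[of x z] P[of y z] h by auto
    qed
  qed
qed

lemma aligned_global: assumes "glob a" "glob b" "q < m" "w \<in> tleaves (Nc q)"
    "inblk N B a (L q @ w)" "inblk N B b (L q @ w)" "aligned Nh Bh crh a b (L q)"
  shows "aligned N B cr a b (L q @ w)"
proof -
  have ca: "cr a = crh a" and cb: "cr b = crh b" using crg assms global_syms by auto
  have P: "inblk N B s x \<longleftrightarrow> (if prefix x (L q) then inblk Nh Bh s x else x = L q @ w)"
    if "s = a \<or> s = b" "prefix x (L q @ w)" for s x
    using global_on_path that assms by blast
  consider "shared_crown Nh Bh crh a b (L q)" | "hangs_below Nh Bh crh a b (L q)" | "hangs_below Nh Bh crh b a (L q)"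
    using assms(7) unfolding aligned_def by blast
  then show ?thesis
  proof cases
    case 1
    have "shared_crown N B cr a b (L q @ w)" unfolding shared_crown_def
    proof (intro conjI allI impI)
      show "cr a = cr b" using 1 ca cb by (simp add: shared_crown_def)
      fix x assume h: "prefix x (L q @ w)" "strict_prefix (cr a) x"
      show "inblk N B a x \<longleftrightarrow> inblk N B b x"
      proof (cases "prefix x (L q)")
        case True then show ?thesis using P[of a x] P[of b x] 1 h ca unfolding shared_crown_def by auto
      next
        case False then show ?thesis using P[of a x] P[of b x] h by auto
      qed
    qed
    then show ?thesis by (simp add: aligned_def)
  next
    case 2 then show ?thesis using hangs_below_global[OF assms(1-6)] by (simp add: aligned_def)
  next
    case 3 then show ?thesis using hangs_below_global[OF assms(2,1,3,4,6,5)] by (simp add: aligned_def)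
  qed
qed

lemma hangs_below_mixed: assumes "glob a" "\<not> glob b" "q < m" "w \<in> tleaves (Nc q)"
    "inblk N B a (L q @ w)" "inblk N B b (L q @ w)"
  shows "hangs_below N B cr a b (L q @ w)"
proof -
  have ib: "inblk (Nc q) (Bc q) b w" using inblk_local assms by blast
  then have "prefix (crc q b @ [0]) w \<or> prefix (crc q b @ [1]) w" using child_below_heads[OF assms(3)] by blast
  then have sp: "strict_prefix (crc q b) w" by (auto simp: strict_prefix_def prefix_def)
  then have wne: "w \<noteq> []" by auto
  have "b \<in> syms (Sc q)" using ib child_block_syms[OF assms(3)] by (auto simp: inblk_def)
  then have "b \<in> syms (Ss!q)" using syms_child assms by blast
  then have cb: "cr b = L q @ crc q b" using crl assms by blast
  have ia: "inblk N B a (L q)" using global_leaf_top assms inblk_top_node L_node by blast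
  show ?thesis unfolding hangs_below_def
  proof (rule exI[of _ "L q"], rule exI[of _ "L q @ w"], intro conjI allI impI)
    show "strict_prefix (L q) (L q @ w)" using wne by (simp add: strict_prefix_def)
    show "prefix (L q @ w) (L q @ w)" by simp
    show "inblk N B a (L q)" by (rule ia)
    show "prefix (L q) (cr b)" using cb by simp
    show "strict_prefix (cr b) (L q @ w)" using cb sp strict_prefix_append_iff by metis
  next
    fix x assume h: "strict_prefix (L q) x" "strict_prefix x (L q @ w)"
    then have "prefix x (L q @ w)" "\<not> prefix x (L q)" "x \<noteq> L q @ w"
      by (auto simp: strict_prefix_def)
    then show "\<not> inblk N B a x" using global_on_path assms by auto
  next
    fix x assume "prefix (L q @ w) x" "prefix x (L q @ w)"
    then have "x = L q @ w" by auto
    then show "inblk N B a x \<longleftrightarrow> inblk N B b x" using assms by simp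
  qed
qed

lemma split_block_syms: "B p = Some \<beta> \<Longrightarrow> set \<beta> \<subseteq> syms S"
proof
  fix a assume h: "B p = Some \<beta>" and a: "a \<in> set \<beta>"
  have "p \<in> N" using Bnone h by force
  then have "inblk N B a p" using h a by (simp add: inblk_def)
  then show "a \<in> syms S" by (rule inblk_syms)
qed

lemma split_heads:
  assumes aS: "a \<in> syms S"
  shows "lhe a = cr a @ [0] \<and> rhe a = cr a @ [1] \<and> inblk N B a (lhe a) \<and> inblk N B a (rhe a)"
proof (cases "glob a")
  case True
  then have c: "cr a = crh a" "lhe a = lheh a" "rhe a = rheh a" using crg aS by auto
  have ash: "a \<in> syms Sh" using global_syms_top True by blast
  then have h: "lheh a = crh a @ [0]" "rheh a = crh a @ [1]" "inblk Nh Bh a (lheh a)" "inblk Nh Bh a (rheh a)"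
    using top_tree.heads by blast+
  then have "lheh a \<in> Nh" "rheh a \<in> Nh" by (auto simp: inblk_def)
  then show ?thesis using h c inblk_top_node True by simp
next
  case False
  obtain q where q: "q < m" "a \<in> syms (Ss!q)" using aS syms_parts by blast
  then have c: "cr a = L q @ crc q a" "lhe a = L q @ lhec q a" "rhe a = L q @ rhec q a" using crl False by auto
  have "a \<in> syms (Sc q)" using local_syms_child False q by blast
  then have h: "lhec q a = crc q a @ [0]" "rhec q a = crc q a @ [1]"
    "inblk (Nc q) (Bc q) a (lhec q a)" "inblk (Nc q) (Bc q) a (rhec q a)"
    using child_heads[OF q(1)] by blast+
  then show ?thesis using c inblk_local False q by simp
qed

lemma split_below_heads:
  assumes ip: "inblk N B a p"
  shows "prefix (cr a @ [0]) p \<or> prefix (cr a @ [1]) p"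
proof -
  have aS: "a \<in> syms S" using inblk_syms ip .
  show ?thesis
  proof (cases "glob a")
    case True
    then have c: "cr a = crh a" using crg aS by auto
    consider "p \<in> Nh" | q w where "q < m" "w \<in> tleaves (Nc q)" "w \<noteq> []" "p = L q @ w"
      using global_inblk_cases True ip by blast
    then show ?thesis
    proof cases
      case 1
      then have "inblk Nh Bh a p" using inblk_top_node True ip by blast
      then have "prefix (crh a @ [0]) p \<or> prefix (crh a @ [1]) p" using top_tree.below_heads by blast
      then show ?thesis using c by simp
    next
      case 2
      then have "inblk Nh Bh a (L q)" using global_leaf_top True ip by blast
      then have "prefix (crh a @ [0]) (L q) \<or> prefix (crh a @ [1]) (L q)" using top_tree.below_heads by blast
      then have "prefix (crh a @ [0]) p \<or> prefix (crh a @ [1]) p" using 2 prefix_prefix by blast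
      then show ?thesis using c by simp
    qed
  next
    case False
    then obtain q w where q: "q < m" "p = L q @ w" "inblk (Nc q) (Bc q) a w" "a \<in> syms (Ss!q)"
      using local_inblk_cases ip by blast
    then have c: "cr a = L q @ crc q a" using crl False by auto
    have "prefix (crc q a @ [0]) w \<or> prefix (crc q a @ [1]) w" using child_below_heads[OF q(1)] q by blast
    then show ?thesis using c q by auto
  qed
qed

lemma top_leaf_occurrence:
  assumes q: "q < m" and a: "inblk Nh Bh a (L q)"
  shows "\<exists>l\<in>tleaves N. prefix (L q) l \<and> inblk N B a l"
proof -
  have "Bh (L q) = Some (Sh!q)" using top_tree.leaf_block lsh q by simp
  then have "a \<in> set (Sh!q)" using a by (auto simp: inblk_def)
  then have "a \<in> syms (Ss!q)" using top_global lsh q by auto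
  then obtain x where x: "x \<in> set (Ss!q)" "a \<in> set x" unfolding syms_def by auto
  then obtain j where j: "j < length (Ss!q)" "Ss!q!j = x" by (meson in_set_conv_nth)
  let ?l = "L q @ leaf_list (Nc q) ! j"
  have "finite (Nc q)" using child_addr_tree[OF q] by (simp add: addr_tree_def)
  moreover have "leaf_list (Nc q) ! j \<in> set (leaf_list (Nc q))" using j length_child_leaves[OF q] by simp
  ultimately have "leaf_list (Nc q) ! j \<in> tleaves (Nc q)" using leaf_list_props(1) by blast
  then have "?l \<in> tleaves N" using leaf_below_L_iff q by blast
  moreover have "inblk N B a ?l" using block_at_child_leaf[OF q j(1)] j x \<open>?l \<in> tleaves N\<close> tleaves_sub
    by (auto simp: inblk_def)
  moreover have "prefix (L q) ?l" by simp
  ultimately show ?thesis by blast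
qed

lemma split_above_leaf:
  assumes ip: "inblk N B a p"
  shows "\<exists>l\<in>tleaves N. prefix p l \<and> inblk N B a l"
proof (cases "glob a")
  case True
  consider "p \<in> Nh" | q w where "q < m" "w \<in> tleaves (Nc q)" "w \<noteq> []" "p = L q @ w"
    using global_inblk_cases True ip by blast
  then show ?thesis
  proof cases
    case 1
    then have "inblk Nh Bh a p" using inblk_top_node True ip by blast
    then obtain l where l: "l \<in> tleaves Nh" "prefix p l" "inblk Nh Bh a l" using top_tree.above_leaf by blast
    then obtain q where q: "q < m" "l = L q" using leaf_is_L by blast
    then show ?thesis using top_leaf_occurrence l by (meson prefix_order.trans)
  next
    case 2
    then have "p \<in> tleaves N" using leaf_below_L_iff by blast
    then show ?thesis using ip by blast
  qed
next
  case False
  then obtain q w where q: "q < m" "p = L q @ w" "inblk (Nc q) (Bc q) a w" "a \<in> syms (Ss!q)"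
    using local_inblk_cases ip by blast
  then obtain l where l: "l \<in> tleaves (Nc q)" "prefix w l" "inblk (Nc q) (Bc q) a l"
    using child_above_leaf[OF q(1)] by blast
  then have "L q @ l \<in> tleaves N" "inblk N B a (L q @ l)" using leaf_below_L_iff inblk_local q False by blast+
  moreover have "prefix p (L q @ l)" using l q by simp
  ultimately show ?thesis by blast
qed

lemma split_aligned_at_leaf:
  assumes h: "v \<in> tleaves N" "a \<noteq> b" "inblk N B a v" "inblk N B b v"
  shows "aligned N B cr a b v"
proof -
  obtain q w where q: "q < m" "w \<in> tleaves (Nc q)" "v = L q @ w" using leaves_N_iff h(1) by blast
  show ?thesis
  proof (cases "glob a")
    case ga: True
    show ?thesis
    proof (cases "glob b")
      case True
      have "inblk Nh Bh a (L q)" "inblk Nh Bh b (L q)" using global_leaf_top ga True q h by blast+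
      then have "aligned Nh Bh crh a b (L q)" using top_tree.aligned_at_leaf L_leaf q h(2) by blast
      then show ?thesis using aligned_global ga True q h by blast
    next
      case False
      then show ?thesis using hangs_below_mixed ga q h unfolding aligned_def by blast
    qed
  next
    case na: False
    show ?thesis
    proof (cases "glob b")
      case True
      then show ?thesis using hangs_below_mixed na q h unfolding aligned_def by blast
    next
      case False
      have ia: "inblk (Nc q) (Bc q) a w" "inblk (Nc q) (Bc q) b w" using inblk_local na False q h by blast+
      then have "a \<in> syms (Sc q)" "b \<in> syms (Sc q)" using child_block_syms[OF q(1)] by (auto simp: inblk_def)
      then have "a \<in> syms (Ss!q)" "b \<in> syms (Ss!q)" using syms_child q by blast+
      moreover have "aligned (Nc q) (Bc q) (crc q) a b w" using child_aligned_at_leaf[OF q(1)] ia q h(2) by blast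
      ultimately show ?thesis using aligned_local na False q by blast
    qed
  qed
qed

lemma tree_inv_split: "tree_inv S N B cr lhe rhe"
proof unfold_locales
  show "addr_tree N" by (rule addr_tree_N)
  show "length (leaf_list N) = length S" by (rule lln)
  show "B (leaf_list N ! i) = Some (S!i)" if "i < length S" for i using Bleaf that by blast
qed (fact split_block_syms split_heads split_below_heads split_above_leaf split_aligned_at_leaf)+

end

lemma deriv_tree_inv: "deriv S N B cr lhe rhe \<Longrightarrow> tree_inv S N B cr lhe rhe"
proof (induction rule: deriv.induct)
  case (one \<beta> cr lhe rhe)
  then show ?case by (rule tree_inv_one)
next
  case (two \<beta>1 \<beta>2 cr lhe rhe)
  then show ?case by (rule tree_inv_two)
next
  case (split S Ss Sh Nh Bh crh lheh rheh Nc Bc crc lhec rhec N B cr lhe rhe)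
  have "split_step S Ss Sh Nh Bh crh lheh rheh Nc Bc crc lhec rhec N B cr lhe rhe"
    by (rule split_step.intro) (use split in auto)
  then show ?case by (rule split_step.tree_inv_split)
qed

section \<open>Restricted trees under the invariant\<close>

lemma max_length_elem: "finite C \<Longrightarrow> u \<in> C \<Longrightarrow> \<exists>x\<in>C. \<forall>y\<in>C. length y \<le> length (x::'b list)"
proof -
  assume f: "finite C" "u \<in> C"
  let ?n = "Max (length ` C)"
  have "?n \<in> length ` C" using f by (intro Max_in) auto
  then obtain x where "x \<in> C" "length x = ?n" by auto
  moreover have "\<forall>y\<in>C. length y \<le> ?n" using f by simp
  ultimately have "\<forall>y\<in>C. length y \<le> length x" by simp
  with \<open>x \<in> C\<close> show ?thesis by blast
qed

lemma min_length_elem: "finite C \<Longrightarrow> u \<in> C \<Longrightarrow> \<exists>x\<in>C. \<forall>y\<in>C. length x \<le> length (y::'b list)"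
proof -
  assume f: "finite C" "u \<in> C"
  let ?n = "Min (length ` C)"
  have "?n \<in> length ` C" using f by (intro Min_in) auto
  then obtain x where "x \<in> C" "length x = ?n" by auto
  moreover have "\<forall>y\<in>C. ?n \<le> length y" using f by simp
  ultimately have "\<forall>y\<in>C. length x \<le> length y" by simp
  with \<open>x \<in> C\<close> show ?thesis by blast
qed

context tree_inv
begin

lemma finite_N: "finite N"
  using addr_tree by (simp add: addr_tree_def)

abbreviation R :: "'a \<Rightarrow> node set" where "R s \<equiv> rnodes N B cr s"

definition occ :: "'a \<Rightarrow> node \<Rightarrow> bool" where
  "occ s l \<longleftrightarrow> l \<in> tleaves N \<and> inblk N B s l"

lemma inblk_syms: "inblk N B s p \<Longrightarrow> s \<in> syms S"
  using block_syms by (auto simp: inblk_def)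

lemma below_crown: "inblk N B s p \<Longrightarrow> strict_prefix (cr s) p"
  using below_heads[of s p] by (auto simp: strict_prefix_def prefix_def)

lemma under_head: "inblk N B s p \<Longrightarrow> prefix (lhe s) p \<or> prefix (rhe s) p"
proof -
  assume h: "inblk N B s p"
  then have "lhe s = cr s @ [0]" "rhe s = cr s @ [1]" using heads[OF inblk_syms] by blast+
  then show ?thesis using below_heads[OF h] by simp
qed

lemma heads_disj: "s \<in> syms S \<Longrightarrow> prefix (lhe s) x \<Longrightarrow> prefix (rhe s) x \<Longrightarrow> False"
proof -
  assume "s \<in> syms S" "prefix (lhe s) x" "prefix (rhe s) x"
  then have "prefix (cr s @ [0]) x" "prefix (cr s @ [1]) x" using heads by auto
  then have "prefix (cr s @ [0]) (cr s @ [1]) \<or> prefix (cr s @ [1]) (cr s @ [0])"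
    using prefix_same_cases by blast
  then show False by simp
qed

lemma head_order: "s \<in> syms S \<Longrightarrow> prefix (lhe s) x \<Longrightarrow> prefix (rhe s) y \<Longrightarrow> x < y"
  using heads sibling_less[of 0 1 "cr s" x y] by auto

lemma R_prefix: "x \<in> R s \<Longrightarrow> prefix (cr s) x"
  unfolding rnodes_def using below_crown by (auto simp: strict_prefix_def)

lemma R_fin: "finite (R s)"
proof -
  have "R s \<subseteq> insert (cr s) N" unfolding rnodes_def by (auto simp: inblk_def)
  then show ?thesis using finite_N finite_subset by blast
qed

lemma R_inblk: "x \<in> R s \<Longrightarrow> x \<noteq> cr s \<Longrightarrow> inblk N B s x"
  unfolding rnodes_def by auto

lemma inblk_R: "inblk N B s x \<Longrightarrow> x \<in> R s"
  unfolding rnodes_def by auto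

lemma rpar_iff: "rpar N B cr s u w \<longleftrightarrow> u \<in> R s \<and> w \<in> R s \<and> w \<noteq> cr s \<and> strict_prefix u w \<and>
    \<not> (\<exists>z\<in>R s. strict_prefix u z \<and> strict_prefix z w)"
  unfolding rpar_def strict_anc_iff by blast

lemma rdesc_imp: "rdesc N B cr s u w \<Longrightarrow> u = w \<or> (u \<in> R s \<and> w \<in> R s \<and> strict_prefix u w)"
  unfolding rdesc_def
proof (induction rule: rtranclp_induct)
  case base then show ?case by simp
next
  case (step y z)
  then have "y \<in> R s" "z \<in> R s" "strict_prefix y z" using rpar_iff by auto
  then show ?case using step.IH by (auto intro: prefix_order.less_trans)
qed

lemma child_towards:
  assumes "w \<in> R s" "v \<in> R s" "strict_prefix w v"
  shows "\<exists>u. rpar N B cr s w u \<and> prefix u v"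
proof -
  let ?C = "{x \<in> R s. strict_prefix w x \<and> prefix x v}"
  have "finite ?C" "v \<in> ?C" using R_fin assms by auto
  then obtain u where u: "u \<in> ?C" "\<forall>y\<in>?C. length u \<le> length y"
    using min_length_elem by blast
  have "strict_prefix (cr s) u"
    using prefix_order.le_less_trans[OF R_prefix[OF assms(1)]] u(1) by blast
  then have "u \<noteq> cr s" by auto
  moreover have "\<not> (\<exists>z\<in>R s. strict_prefix w z \<and> strict_prefix z u)"
  proof
    assume "\<exists>z\<in>R s. strict_prefix w z \<and> strict_prefix z u"
    then obtain z where z: "z \<in> R s" "strict_prefix w z" "strict_prefix z u" by blast
    then have "z \<in> ?C" using u(1) by (auto simp: strict_prefix_def intro: prefix_order.trans)
    then show False using u(2) prefix_length_less[OF z(3)] by fastforce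
  qed
  ultimately show ?thesis using u(1) assms(1) unfolding rpar_iff by blast
qed

lemma rdesc_intro:
  assumes "u \<in> R s" "w \<in> R s" "prefix u w"
  shows "rdesc N B cr s u w"
  using assms
proof (induction "length w - length u" arbitrary: u rule: less_induct)
  case less
  show ?case
  proof (cases "u = w")
    case True then show ?thesis by (simp add: rdesc_def)
  next
    case False
    then have "strict_prefix u w" using less.prems by (simp add: strict_prefix_def)
    then obtain x where x: "rpar N B cr s u x" "prefix x w" using child_towards less.prems by blast
    then have "x \<in> R s" "length u < length x" "length x \<le> length w"
      using rpar_iff prefix_length_less prefix_length_le by auto
    then have "rdesc N B cr s x w" using less.hyps x(2) less.prems(2) by simp
    then show ?thesis using x(1) unfolding rdesc_def by (blast intro: converse_rtranclp_into_rtranclp)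
  qed
qed

lemma rdesc_iff: "u \<in> R s \<Longrightarrow> rdesc N B cr s u w \<longleftrightarrow> w \<in> R s \<and> prefix u w"
  using rdesc_imp rdesc_intro by (auto simp: strict_prefix_def)

lemma leaf_prefix_eq: "v \<in> tleaves N \<Longrightarrow> l \<in> tleaves N \<Longrightarrow> prefix v l \<Longrightarrow> v = l"
  using leaf_maximal addr_tree tleaves_sub by (metis subsetD)

lemma rleaf_iff: assumes "s \<in> syms S" shows "rleaf N B cr s v \<longleftrightarrow> occ s v"
proof
  assume h: "occ s v"
  have "\<not> rpar N B cr s v w" for w
  proof
    assume "rpar N B cr s v w"
    then have "inblk N B s w" "strict_prefix v w" using rpar_iff R_inblk by auto
    then show False using leaf_maximal addr_tree h
      by (auto simp: occ_def inblk_def strict_prefix_def)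
  qed
  then show "rleaf N B cr s v" using h inblk_R by (auto simp: rleaf_def occ_def)
next
  assume h: "rleaf N B cr s v"
  then have vR: "v \<in> R s" by (auto simp: rleaf_def)
  have no_desc: "\<not> strict_prefix v w" if w: "w \<in> R s" for w
  proof
    assume "strict_prefix v w"
    then obtain y where "rpar N B cr s v y" using child_towards vR w by blast
    then show False using h by (auto simp: rleaf_def)
  qed
  have "lhe s \<in> R s" "strict_prefix (cr s) (lhe s)" using heads[OF assms] inblk_R below_crown by blast+
  then have "v \<noteq> cr s" using no_desc by blast
  then have ib: "inblk N B s v" using R_inblk vR by blast
  then obtain l where l: "l \<in> tleaves N" "prefix v l" "inblk N B s l" using above_leaf by blast
  then have "l = v" using no_desc inblk_R by (auto simp: strict_prefix_def)
  then show "occ s v" using l by (simp add: occ_def)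
qed

lemma finite_occ: "finite {l. occ s l}"
  using finite_subset[OF _ finite_N] tleaves_sub by (auto simp: occ_def)

lemma occ_under_heads:
  assumes "s \<in> syms S"
  shows "\<exists>l. occ s l \<and> prefix (lhe s) l" "\<exists>l. occ s l \<and> prefix (rhe s) l"
proof -
  have "inblk N B s (lhe s)" "inblk N B s (rhe s)" using heads[OF assms] by blast+
  then show "\<exists>l. occ s l \<and> prefix (lhe s) l" "\<exists>l. occ s l \<and> prefix (rhe s) l"
    using above_leaf unfolding occ_def by blast+
qed

lemma lwt_props:
  assumes "s \<in> syms S"
  shows "occ s (lwt N B cr s)" "\<And>l. occ s l \<Longrightarrow> lwt N B cr s \<le> l" "prefix (lhe s) (lwt N B cr s)"
proof -
  have "{v. rleaf N B cr s v} = {l. occ s l}" using rleaf_iff[OF assms] by blast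
  then have eq: "lwt N B cr s = Min {l. occ s l}" by (simp add: lwt_def)
  obtain l0 where l0: "occ s l0" "prefix (lhe s) l0" using occ_under_heads(1)[OF assms] by blast
  show m: "occ s (lwt N B cr s)" using eq Min_in[OF finite_occ] l0(1) by auto
  show le: "\<And>l. occ s l \<Longrightarrow> lwt N B cr s \<le> l" using eq Min_le[OF finite_occ] by simp
  have "prefix (lhe s) (lwt N B cr s) \<or> prefix (rhe s) (lwt N B cr s)"
    using m under_head by (auto simp: occ_def)
  moreover have "\<not> prefix (rhe s) (lwt N B cr s)"
    using head_order[OF assms l0(2)] le[OF l0(1)] by (meson leD)
  ultimately show "prefix (lhe s) (lwt N B cr s)" by blast
qed

lemma rwt_props:
  assumes "s \<in> syms S"
  shows "occ s (rwt N B cr s)" "\<And>l. occ s l \<Longrightarrow> l \<le> rwt N B cr s" "prefix (rhe s) (rwt N B cr s)"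
proof -
  have "{v. rleaf N B cr s v} = {l. occ s l}" using rleaf_iff[OF assms] by blast
  then have eq: "rwt N B cr s = Max {l. occ s l}" by (simp add: rwt_def)
  obtain l0 where l0: "occ s l0" "prefix (rhe s) l0" using occ_under_heads(2)[OF assms] by blast
  show m: "occ s (rwt N B cr s)" using eq Max_in[OF finite_occ] l0(1) by auto
  show le: "\<And>l. occ s l \<Longrightarrow> l \<le> rwt N B cr s" using eq Max_ge[OF finite_occ] by simp
  have "prefix (lhe s) (rwt N B cr s) \<or> prefix (rhe s) (rwt N B cr s)"
    using m under_head by (auto simp: occ_def)
  moreover have "\<not> prefix (lhe s) (rwt N B cr s)"
    using head_order[OF assms _ l0(2)] le[OF l0(1)] by (meson leD)
  ultimately show "prefix (rhe s) (rwt N B cr s)" by blast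
qed

lemma lwing_iff:
  assumes "s \<in> syms S"
  shows "w \<in> lwing N B cr lhe s \<longleftrightarrow> w \<in> R s \<and> prefix (lhe s) w \<and> prefix w (lwt N B cr s)"
proof -
  have "lwt N B cr s \<in> R s" "lhe s \<in> R s"
    using lwt_props(1)[OF assms] heads[OF assms] inblk_R by (auto simp: occ_def)
  then show ?thesis unfolding lwing_def using rdesc_iff by auto
qed

lemma rwing_iff:
  assumes "s \<in> syms S"
  shows "w \<in> rwing N B cr rhe s \<longleftrightarrow> w \<in> R s \<and> prefix (rhe s) w \<and> prefix w (rwt N B cr s)"
proof -
  have "rwt N B cr s \<in> R s" "rhe s \<in> R s"
    using rwt_props(1)[OF assms] heads[OF assms] inblk_R by (auto simp: occ_def)
  then show ?thesis unfolding rwing_def using rdesc_iff by auto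
qed

lemma wing_below_head:
  assumes s: "s \<in> syms S"
    and side: "h = lhe s \<and> t = lwt N B cr s \<or> h = rhe s \<and> t = rwt N B cr s"
    and hx: "prefix h x"
  shows "x \<in> lwing N B cr lhe s \<union> rwing N B cr rhe s \<longleftrightarrow> x \<in> R s \<and> prefix x t"
  using side
proof (elim disjE conjE)
  assume "h = lhe s" "t = lwt N B cr s"
  then show ?thesis using lwing_iff[OF s] rwing_iff[OF s] heads_disj[OF s] hx by auto
next
  assume "h = rhe s" "t = rwt N B cr s"
  then show ?thesis using lwing_iff[OF s] rwing_iff[OF s] heads_disj[OF s] hx by auto
qed

lemma quill_on_path:
  assumes s: "s \<in> syms S" and v: "occ s v"
    and side: "h = lhe s \<and> t = lwt N B cr s \<or> h = rhe s \<and> t = rwt N B cr s"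
    and hv: "prefix h v" and vt: "v \<noteq> t"
  shows "\<exists>u. quill N B cr lhe rhe s u \<and> rdesc N B cr s h u \<and> inblk N B s u \<and>
           prefix h u \<and> prefix u v \<and> \<not> prefix u t"
proof -
  have hR: "h \<in> R s" and ht: "prefix h t" and t: "occ s t" and h_crown: "h \<noteq> cr s"
    using side heads[OF s] inblk_R lwt_props[OF s] rwt_props[OF s] by auto
  have vR: "v \<in> R s" using v inblk_R by (simp add: occ_def)
  let ?W = "{x \<in> R s. prefix h x \<and> prefix x v \<and> prefix x t}"
  have "finite ?W" "h \<in> ?W" using R_fin hR hv ht by auto
  then obtain w where w: "w \<in> ?W" "\<forall>y\<in>?W. length y \<le> length w" using max_length_elem by blast
  have "v \<notin> ?W" using leaf_prefix_eq v t vt by (auto simp: occ_def)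
  then have "strict_prefix w v" using w(1) vR by (auto simp: strict_prefix_def)
  then obtain u where u: "rpar N B cr s w u" "prefix u v" using child_towards w(1) vR by blast
  then have uR: "u \<in> R s" and wu: "strict_prefix w u" using rpar_iff by auto
  have hu: "prefix h u" using w(1) wu by (auto simp: strict_prefix_def intro: prefix_order.trans)
  have ut: "\<not> prefix u t" using w(2) uR hu u(2) prefix_length_less[OF wu] by fastforce
  have "quill N B cr lhe rhe s u"
    unfolding quill_def using u(1) w(1) uR ut wing_below_head[OF s side] hu by blast
  moreover have "strict_prefix (cr s) h" using R_prefix[OF hR] h_crown by (simp add: strict_prefix_def)
  then have "strict_prefix (cr s) u" using prefix_order.less_le_trans hu by blast
  then have "inblk N B s u" using R_inblk uR by auto
  ultimately show ?thesis using rdesc_intro[OF hR uR hu] hu u(2) ut by blast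
qed

lemma dove_quill_leaf:
  assumes s: "s \<in> syms S" and v: "occ s v" and nw: "v \<noteq> lwt N B cr s"
    and nf: "\<not> feather N B cr lhe rhe s v" and hv: "prefix (lhe s) v"
  shows "\<exists>u l. inblk N B s u \<and> prefix (lhe s) u \<and> prefix u v \<and> \<not> prefix u (lwt N B cr s) \<and>
           occ s l \<and> prefix u l \<and> v < l"
proof -
  obtain u where u: "quill N B cr lhe rhe s u" "rdesc N B cr s (lhe s) u" "inblk N B s u"
    "prefix (lhe s) u" "prefix u v" "\<not> prefix u (lwt N B cr s)"
    using quill_on_path[OF s v _ hv nw] by blast
  let ?M = "{l. rleaf N B cr s l \<and> rdesc N B cr s u l}"
  have M: "l \<in> ?M \<longleftrightarrow> occ s l \<and> prefix u l" for l
    using rleaf_iff[OF s] rdesc_iff[OF inblk_R[OF u(3)]] inblk_R by (auto simp: occ_def)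
  have fin: "finite ?M" using finite_subset[OF _ finite_occ] M by blast
  have vM: "v \<in> ?M" using M v u(5) by blast
  have "v \<noteq> Max ?M" using nf u(1,2) vM unfolding feather_def by blast
  then have "v < Max ?M" using Max_ge[OF fin vM] by (simp add: order.strict_iff_order)
  moreover have "Max ?M \<in> ?M" using Max_in[OF fin] vM by blast
  ultimately show ?thesis using u M by blast
qed

lemma hawk_quill_leaf:
  assumes s: "s \<in> syms S" and v: "occ s v" and nw: "v \<noteq> rwt N B cr s"
    and nf: "\<not> feather N B cr lhe rhe s v" and hv: "prefix (rhe s) v"
  shows "\<exists>u l. inblk N B s u \<and> prefix (rhe s) u \<and> prefix u v \<and> \<not> prefix u (rwt N B cr s) \<and>
           occ s l \<and> prefix u l \<and> l < v"
proof -
  obtain u where u: "quill N B cr lhe rhe s u" "rdesc N B cr s (rhe s) u" "inblk N B s u"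
    "prefix (rhe s) u" "prefix u v" "\<not> prefix u (rwt N B cr s)"
    using quill_on_path[OF s v _ hv nw] by blast
  let ?M = "{l. rleaf N B cr s l \<and> rdesc N B cr s u l}"
  have M: "l \<in> ?M \<longleftrightarrow> occ s l \<and> prefix u l" for l
    using rleaf_iff[OF s] rdesc_iff[OF inblk_R[OF u(3)]] inblk_R by (auto simp: occ_def)
  have fin: "finite ?M" using finite_subset[OF _ finite_occ] M by blast
  have vM: "v \<in> ?M" using M v u(5) by blast
  have "v \<noteq> Min ?M" using nf u(1,2) vM unfolding feather_def by blast
  then have "Min ?M < v" using Min_le[OF fin vM] by (simp add: order.strict_iff_order)
  moreover have "Min ?M \<in> ?M" using Min_in[OF fin] vM by blast
  ultimately show ?thesis using u M by blast
qed

end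

section \<open>Nesting at a leaf\<close>

lemma followed_append: "x \<in> set A \<Longrightarrow> y \<in> set B \<Longrightarrow> followed (A @ B) x y"
proof -
  assume "x \<in> set A" "y \<in> set B"
  then obtain p q where "p < length A" "A!p = x" "q < length B" "B!q = y" by (meson in_set_conv_nth)
  then show ?thesis unfolding followed_def
    by (intro exI[of _ p] exI[of _ "length A + q"]) (auto simp: nth_append)
qed

lemma followed_concat: assumes "k1 < k2" "k2 < length T" "x \<in> set (T!k1)" "y \<in> set (T!k2)"
  shows "followed (concat T) x y"
proof -
  have k: "k1 < length (take k2 T)" using assms by simp
  have "take k2 T ! k1 \<in> set (take k2 T)" using nth_mem[OF k] .
  then have "T!k1 \<in> set (take k2 T)" using assms by simp
  then have xin: "x \<in> set (concat (take k2 T))" using assms(3) by auto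
  have "drop k2 T = T!k2 # drop (Suc k2) T" using assms(2) by (simp add: Cons_nth_drop_Suc)
  then have yin: "y \<in> set (concat (drop k2 T))" using assms(4) by simp
  have eq: "concat (take k2 T) @ concat (drop k2 T) = concat T"
    by (simp flip: concat_append)
  have "followed (concat (take k2 T) @ concat (drop k2 T)) x y" using followed_append[OF xin yin] .
  then show ?thesis using eq by simp
qed

lemma followed_either: assumes "x \<in> set xs" "y \<in> set xs" "x \<noteq> y"
  shows "followed xs x y \<or> followed xs y x"
proof -
  obtain p q where pq: "p < length xs" "xs!p = x" "q < length xs" "xs!q = y" using assms by (meson in_set_conv_nth)
  then have "p \<noteq> q" using assms(3) by auto
  then have "p < q \<or> q < p" by arith
  then show ?thesis unfolding followed_def using pq by blast
qed

lemma in_concat_take: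
  assumes "j < i" "j < length T" "x \<in> set (T!j)"
  shows "x \<in> set (concat (take i T))"
proof -
  have "take i T ! j \<in> set (take i T)" using assms(1,2) by (intro nth_mem) simp
  then show ?thesis using assms(1,3) by auto
qed

lemma in_concat_drop:
  assumes "i < j" "j < length T" "x \<in> set (T!j)"
  shows "x \<in> set (concat (drop (Suc i) T))"
proof -
  have "drop (Suc i) T ! (j - Suc i) \<in> set (drop (Suc i) T)" using assms(1,2) by (intro nth_mem) simp
  then show ?thesis using assms by auto
qed

context tree_inv
begin

definition before :: "node \<Rightarrow> 'a \<Rightarrow> 'a \<Rightarrow> bool" where
  "before v x y \<longleftrightarrow> (\<exists>l1 l2. occ x l1 \<and> occ y l2 \<and> l1 < l2 \<and> l2 < v)"

definition after :: "node \<Rightarrow> 'a \<Rightarrow> 'a \<Rightarrow> bool" where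
  "after v x y \<longleftrightarrow> (\<exists>l1 l2. occ x l1 \<and> occ y l2 \<and> v < l1 \<and> l1 < l2)"

definition occurs_before :: "node \<Rightarrow> 'a \<Rightarrow> bool" where
  "occurs_before v x \<longleftrightarrow> (\<exists>l. occ x l \<and> l < v)"

definition occurs_after :: "node \<Rightarrow> 'a \<Rightarrow> bool" where
  "occurs_after v x \<longleftrightarrow> (\<exists>l. occ x l \<and> v < l)"

text \<open>Two occurrences at the same leaf
  (of distinct symbols) are ordered in S, which is why the last two disjuncts only ask for
  occurrences on one side.\<close>
definition nested_leaf :: "node \<Rightarrow> 'a \<Rightarrow> 'a \<Rightarrow> bool" where
  "nested_leaf v a b \<longleftrightarrow> (before v a b \<and> after v b a) \<or> (before v b a \<and> after v a b) \<or>
     (occurs_before v a \<and> occurs_before v b \<and> after v a b \<and> after v b a) \<or>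
     (before v a b \<and> before v b a \<and> occurs_after v a \<and> occurs_after v b)"

lemma nested_leaf_sym: "nested_leaf v a b \<Longrightarrow> nested_leaf v b a"
  unfolding nested_leaf_def by blast

lemma wingtip_facts:
  assumes "s \<in> syms S" "occ s v" "v \<noteq> lwt N B cr s" "v \<noteq> rwt N B cr s"
  shows "occ s (lwt N B cr s)" "lwt N B cr s < v" "prefix (lhe s) (lwt N B cr s)"
    "occ s (rwt N B cr s)" "v < rwt N B cr s" "prefix (rhe s) (rwt N B cr s)"
  using lwt_props[OF assms(1)] rwt_props[OF assms(1)] assms(2-4)
  by (auto simp: order.strict_iff_order)

lemma occ_below: "occ s l \<Longrightarrow> strict_prefix (cr s) l"
  unfolding occ_def using below_crown by blast

text \<open>If a and b share their crown, they share their heads.  When v lies below the left head, the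
  dove quills of a and b on the path to v give occurrences of both after v, each to the left of the
  right wingtip of the other symbol; the wingtips supply occurrences before v.  Symmetrically for
  the right head.\<close>
lemma nested_if_shared_crown:
  assumes v: "occ a v" "occ b v"
    and nw: "v \<noteq> lwt N B cr a" "v \<noteq> rwt N B cr a" "v \<noteq> lwt N B cr b" "v \<noteq> rwt N B cr b"
    and nf: "\<not> feather N B cr lhe rhe a v" "\<not> feather N B cr lhe rhe b v"
    and c: "cr a = cr b"
  shows "nested_leaf v a b"
proof -
  have sa: "a \<in> syms S" and sb: "b \<in> syms S" using v inblk_syms by (auto simp: occ_def)
  have hh: "lhe a = lhe b" "rhe a = rhe b" using heads sa sb c by auto
  note a_tips = wingtip_facts[OF sa v(1) nw(1,2)] and b_tips = wingtip_facts[OF sb v(2) nw(3,4)]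
  consider "prefix (lhe a) v" | "prefix (rhe a) v" using under_head v(1) by (auto simp: occ_def)
  then show ?thesis
  proof cases
    case 1
    obtain ua la where a1: "prefix (lhe a) ua" "occ a la" "prefix ua la" "v < la"
      using dove_quill_leaf[OF sa v(1) nw(1) nf(1) 1] by blast
    obtain ub lb where b1: "prefix (lhe b) ub" "occ b lb" "prefix ub lb" "v < lb"
      using dove_quill_leaf[OF sb v(2) nw(3) nf(2)] 1 hh by metis
    have "la < rwt N B cr b" using head_order[OF sb] a1 hh b_tips(6) prefix_order.trans by metis
    moreover have "lb < rwt N B cr a" using head_order[OF sa] b1 hh a_tips(6) prefix_order.trans by metis
    ultimately have "after v a b" "after v b a" using a1 b1 a_tips b_tips unfolding after_def by blast+
    moreover have "occurs_before v a" "occurs_before v b" using a_tips b_tips unfolding occurs_before_def by blast+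
    ultimately show ?thesis unfolding nested_leaf_def by blast
  next
    case 2
    obtain ua la where a1: "prefix (rhe a) ua" "occ a la" "prefix ua la" "la < v"
      using hawk_quill_leaf[OF sa v(1) nw(2) nf(1) 2] by blast
    obtain ub lb where b1: "prefix (rhe b) ub" "occ b lb" "prefix ub lb" "lb < v"
      using hawk_quill_leaf[OF sb v(2) nw(4) nf(2)] 2 hh by metis
    have "lwt N B cr a < lb" using head_order[OF sa] b1 hh a_tips(3) prefix_order.trans by metis
    moreover have "lwt N B cr b < la" using head_order[OF sb] a1 hh b_tips(3) prefix_order.trans by metis
    ultimately have "before v a b" "before v b a" using a1 b1 a_tips b_tips unfolding before_def by blast+
    moreover have "occurs_after v a" "occurs_after v b" using a_tips b_tips unfolding occurs_after_def by blast+
    ultimately show ?thesis unfolding nested_leaf_def by blast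
  qed
qed

context
  fixes x y v p g
  assumes v: "occ x v" "occ y v"
    and nw: "v \<noteq> lwt N B cr x" "v \<noteq> rwt N B cr x" "v \<noteq> lwt N B cr y" "v \<noteq> rwt N B cr y"
    and nf: "\<not> feather N B cr lhe rhe x v" "\<not> feather N B cr lhe rhe y v"
    and pg: "strict_prefix p g" "prefix g v" "inblk N B x p" "prefix p (cr y)" "strict_prefix (cr y) g"
     "\<forall>z. strict_prefix p z \<longrightarrow> strict_prefix z g \<longrightarrow> \<not> inblk N B x z"
     "\<forall>z. prefix g z \<longrightarrow> prefix z v \<longrightarrow> (inblk N B x z \<longleftrightarrow> inblk N B y z)"
begin

lemma hang_syms: "x \<in> syms S" "y \<in> syms S"
  using v inblk_syms by (auto simp: occ_def)

lemmas x_tips = wingtip_facts[OF hang_syms(1) v(1) nw(1,2)]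
  and y_tips = wingtip_facts[OF hang_syms(2) v(2) nw(3,4)]

lemma hang_pv: "prefix p v"
  using pg(1,2) by (auto simp: strict_prefix_def intro: prefix_order.trans)

lemma hang_occ_y: "occ y l \<Longrightarrow> prefix p l"
  using occ_below pg(4) by (auto simp: strict_prefix_def intro: prefix_order.trans)

lemma hang_shared:
  assumes u: "inblk N B x u" "prefix u v" "\<not> prefix u p"
  shows "inblk N B y u"
proof -
  have "strict_prefix p u" using prefix_comparable[OF hang_pv u(2)] u(3) by (auto simp: strict_prefix_def)
  then have "\<not> strict_prefix u g" using pg(6) u(1) by blast
  then have "prefix g u" using prefix_comparable[OF u(2) pg(2)] by (auto simp: strict_prefix_def)
  then show ?thesis using pg(7) u by blast
qed

text \<open>x occurs outside the subtree of p on both sides of v: these occurrences enclose all of y.\<close>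
lemma hang_outer_both:
  assumes outer_left: "\<exists>l1. occ x l1 \<and> l1 < v \<and> \<not> prefix p l1"
    and outer_right: "\<exists>l3. occ x l3 \<and> v < l3 \<and> \<not> prefix p l3"
  shows "nested_leaf v x y"
proof -
  obtain l1 where l1: "occ x l1" "l1 < v" "\<not> prefix p l1" using outer_left by blast
  obtain l3 where l3: "occ x l3" "v < l3" "\<not> prefix p l3" using outer_right by blast
  have "l1 < lwt N B cr y" using left_of_subtree[OF l1(3) l1(2) hang_pv hang_occ_y[OF y_tips(1)]] .
  then have "before v x y" using l1 y_tips unfolding before_def by blast
  moreover have "rwt N B cr y < l3" using right_of_subtree[OF l3(3) l3(2) hang_pv hang_occ_y[OF y_tips(4)]] .
  then have "after v y x" using l3 y_tips unfolding after_def by blast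
  ultimately show ?thesis unfolding nested_leaf_def by blast
qed

text \<open>x does not occur outside the subtree of p to the right of v: then p lies below the right head of x,
  and the hawk quill of x on the path to v, which also carries y, decides the nesting.\<close>
lemma hang_no_outer_right:
  assumes no_outer_right: "\<not> (\<exists>l3. occ x l3 \<and> v < l3 \<and> \<not> prefix p l3)"
  shows "nested_leaf v x y"
proof -
  have prw: "prefix p (rwt N B cr x)" using no_outer_right x_tips by blast
  have hp: "prefix (rhe x) p"
  proof -
    have "prefix (lhe x) p \<or> prefix (rhe x) p" using under_head pg(3) by blast
    moreover have "\<not> prefix (lhe x) p" using heads_disj[OF hang_syms(1)] prw x_tips(6) prefix_order.trans by blast
    ultimately show ?thesis by blast
  qed
  obtain ux lx where ux: "inblk N B x ux" "prefix (rhe x) ux" "prefix ux v" "\<not> prefix ux (rwt N B cr x)"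
    "occ x lx" "prefix ux lx" "lx < v"
    using hawk_quill_leaf[OF hang_syms(1) v(1) nw(2) nf(1)] hp hang_pv prefix_order.trans by metis
  have "\<not> prefix ux p" using ux(4) prw prefix_order.trans by blast
  then have iyu: "inblk N B y ux" using hang_shared ux(1,3) by blast
  have allX: "lwt N B cr x < l" if "prefix p l" for l
    using head_order[OF hang_syms(1) x_tips(3)] hp that prefix_order.trans by blast
  have pxy: "before v x y" using allX[OF hang_occ_y[OF y_tips(1)]] x_tips y_tips unfolding before_def by blast
  consider "prefix (rhe y) ux" | "prefix (lhe y) ux" using under_head iyu by blast
  then show ?thesis
  proof cases
    case 1
    have "lwt N B cr y < lx" using head_order[OF hang_syms(2) y_tips(3)] 1 ux(6) prefix_order.trans by blast
    then have "before v y x" using ux y_tips unfolding before_def by blast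
    moreover have "occurs_after v x" "occurs_after v y" using x_tips y_tips unfolding occurs_after_def by blast+
    ultimately show ?thesis using pxy unfolding nested_leaf_def by blast
  next
    case 2
    obtain uy ly where uy: "prefix uy v" "\<not> prefix uy (lwt N B cr y)" "occ y ly" "prefix uy ly" "v < ly"
      using dove_quill_leaf[OF hang_syms(2) v(2) nw(3) nf(2)] 2 ux(3) prefix_order.trans by metis
    consider "prefix ux uy" | "strict_prefix uy ux" using prefix_comparable[OF ux(3) uy(1)] by blast
    then show ?thesis
    proof cases
      case 1
      have "ly < rwt N B cr x" using right_of_subtree[OF ux(4) x_tips(5) ux(3)] 1 uy(4) prefix_order.trans by blast
      then have "after v y x" using uy x_tips unfolding after_def by blast
      then show ?thesis using pxy unfolding nested_leaf_def by blast
    next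
      case 2
      have "prefix uy lx" using 2 ux(6) by (auto simp: strict_prefix_def intro: prefix_order.trans)
      then have "lwt N B cr y < lx" using left_of_subtree[OF uy(2) y_tips(2) uy(1)] by blast
      then have "before v y x" using ux y_tips unfolding before_def by blast
      moreover have "occurs_after v x" "occurs_after v y" using x_tips y_tips unfolding occurs_after_def by blast+
      ultimately show ?thesis using pxy unfolding nested_leaf_def by blast
    qed
  qed
qed

text \<open>x does not occur outside the subtree of p to the left of v: then p lies below the left head of
  x, and the dove quill of x on the path to v decides the nesting.\<close>
lemma hang_no_outer_left:
  assumes no_outer_left: "\<not> (\<exists>l1. occ x l1 \<and> l1 < v \<and> \<not> prefix p l1)"
  shows "nested_leaf v x y"
proof -
  have plw: "prefix p (lwt N B cr x)" using no_outer_left x_tips by blast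
  have hp: "prefix (lhe x) p"
  proof -
    have "prefix (lhe x) p \<or> prefix (rhe x) p" using under_head pg(3) by blast
    moreover have "\<not> prefix (rhe x) p" using heads_disj[OF hang_syms(1)] plw x_tips(3) prefix_order.trans by blast
    ultimately show ?thesis by blast
  qed
  obtain ux lx where ux: "inblk N B x ux" "prefix (lhe x) ux" "prefix ux v" "\<not> prefix ux (lwt N B cr x)"
    "occ x lx" "prefix ux lx" "v < lx"
    using dove_quill_leaf[OF hang_syms(1) v(1) nw(1) nf(1)] hp hang_pv prefix_order.trans by metis
  have "\<not> prefix ux p" using ux(4) plw prefix_order.trans by blast
  then have iyu: "inblk N B y ux" using hang_shared ux(1,3) by blast
  have allX: "l < rwt N B cr x" if "prefix p l" for l
    using head_order[OF hang_syms(1) _ x_tips(6)] hp that prefix_order.trans by blast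
  have pyx: "after v y x" using allX[OF hang_occ_y[OF y_tips(4)]] x_tips y_tips unfolding after_def by blast
  consider "prefix (lhe y) ux" | "prefix (rhe y) ux" using under_head iyu by blast
  then show ?thesis
  proof cases
    case 1
    have "lx < rwt N B cr y" using head_order[OF hang_syms(2) _ y_tips(6)] 1 ux(6) prefix_order.trans by blast
    then have "after v x y" using ux y_tips unfolding after_def by blast
    moreover have "occurs_before v x" "occurs_before v y" using x_tips y_tips unfolding occurs_before_def by blast+
    ultimately show ?thesis using pyx unfolding nested_leaf_def by blast
  next
    case 2
    obtain uy ly where uy: "prefix uy v" "\<not> prefix uy (rwt N B cr y)" "occ y ly" "prefix uy ly" "ly < v"
      using hawk_quill_leaf[OF hang_syms(2) v(2) nw(4) nf(2)] 2 ux(3) prefix_order.trans by metis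
    consider "prefix ux uy" | "strict_prefix uy ux" using prefix_comparable[OF ux(3) uy(1)] by blast
    then show ?thesis
    proof cases
      case 1
      have "lwt N B cr x < ly" using left_of_subtree[OF ux(4) x_tips(2) ux(3)] 1 uy(4) prefix_order.trans by blast
      then have "before v x y" using uy x_tips unfolding before_def by blast
      then show ?thesis using pyx unfolding nested_leaf_def by blast
    next
      case 2
      have "prefix uy lx" using 2 ux(6) by (auto simp: strict_prefix_def intro: prefix_order.trans)
      then have "lx < rwt N B cr y" using right_of_subtree[OF uy(2) y_tips(5) uy(1)] by blast
      then have "after v x y" using ux y_tips unfolding after_def by blast
      moreover have "occurs_before v x" "occurs_before v y" using x_tips y_tips unfolding occurs_before_def by blast+
      ultimately show ?thesis using pyx unfolding nested_leaf_def by blast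
    qed
  qed
qed

end

lemma nested_if_hangs_below:
  assumes v: "occ x v" "occ y v"
    and nw: "v \<noteq> lwt N B cr x" "v \<noteq> rwt N B cr x" "v \<noteq> lwt N B cr y" "v \<noteq> rwt N B cr y"
    and nf: "\<not> feather N B cr lhe rhe x v" "\<not> feather N B cr lhe rhe y v"
    and lb: "hangs_below N B cr x y v"
  shows "nested_leaf v x y"
proof -
  obtain p g where pg: "strict_prefix p g" "prefix g v" "inblk N B x p"
     "prefix p (cr y)" "strict_prefix (cr y) g"
     "\<forall>z. strict_prefix p z \<longrightarrow> strict_prefix z g \<longrightarrow> \<not> inblk N B x z"
     "\<forall>z. prefix g z \<longrightarrow> prefix z v \<longrightarrow> (inblk N B x z \<longleftrightarrow> inblk N B y z)"
    using lb unfolding hangs_below_def by blast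
  consider "\<exists>l1. occ x l1 \<and> l1 < v \<and> \<not> prefix p l1" "\<exists>l3. occ x l3 \<and> v < l3 \<and> \<not> prefix p l3"
    | "\<not> (\<exists>l3. occ x l3 \<and> v < l3 \<and> \<not> prefix p l3)"
    | "\<not> (\<exists>l1. occ x l1 \<and> l1 < v \<and> \<not> prefix p l1)"
    by blast
  then show ?thesis
  proof cases
    case 1 then show ?thesis by (rule hang_outer_both[OF v nw nf pg])
  next
    case 2 then show ?thesis by (rule hang_no_outer_right[OF v nw nf pg])
  next
    case 3 then show ?thesis by (rule hang_no_outer_left[OF v nw nf pg])
  qed
qed

lemma nested_leaf_at:
  assumes v: "occ a v" "occ b v" and ab: "a \<noteq> b"
    and nw: "v \<noteq> lwt N B cr a" "v \<noteq> rwt N B cr a" "v \<noteq> lwt N B cr b" "v \<noteq> rwt N B cr b"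
    and nf: "\<not> feather N B cr lhe rhe a v" "\<not> feather N B cr lhe rhe b v"
  shows "nested_leaf v a b"
proof -
  have "aligned N B cr a b v" using aligned_at_leaf v ab by (auto simp: occ_def)
  then consider "shared_crown N B cr a b v" | "hangs_below N B cr a b v" | "hangs_below N B cr b a v" unfolding aligned_def by blast
  then show ?thesis
  proof cases
    case 1 then show ?thesis using nested_if_shared_crown assms unfolding shared_crown_def by blast
  next
    case 2 then show ?thesis using nested_if_hangs_below assms by blast
  next
    case 3 then show ?thesis using nested_if_hangs_below[OF v(2,1) nw(3,4,1,2) nf(2,1)] nested_leaf_sym by blast
  qed
qed

lemma occ_index:
  assumes "occ s l"
  shows "\<exists>j<length S. l = leaf_list N ! j \<and> s \<in> set (S!j)"
proof -
  have "l \<in> set (leaf_list N)" using assms leaf_list_props(1)[OF finite_N] by (simp add: occ_def)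
  then obtain j where j: "j < length (leaf_list N)" "l = leaf_list N ! j" by (auto simp: in_set_conv_nth)
  then have "B l = Some (S!j)" "j < length S" using length_leaves leaf_block by auto
  then show ?thesis using assms j unfolding occ_def inblk_def by auto
qed

lemma index_less: "j < length S \<Longrightarrow> k < length S \<Longrightarrow> leaf_list N ! j < leaf_list N ! k \<longleftrightarrow> j < k"
  using leaf_list_index_less[OF finite_N] length_leaves by simp

context
  fixes i v assumes iv: "i < length S" "leaf_list N ! i = v"
begin

lemma before_followed: "before v x y \<Longrightarrow> followed (concat (take i S)) x y"
proof -
  assume "before v x y"
  then obtain l1 l2 where l: "occ x l1" "occ y l2" "l1 < l2" "l2 < v" unfolding before_def by blast
  obtain j1 where j1: "j1 < length S" "l1 = leaf_list N ! j1" "x \<in> set (S!j1)" using occ_index[OF l(1)] by blast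
  obtain j2 where j2: "j2 < length S" "l2 = leaf_list N ! j2" "y \<in> set (S!j2)" using occ_index[OF l(2)] by blast
  have "j1 < j2" using index_less[OF j1(1) j2(1)] l(3) j1(2) j2(2) by simp
  moreover have "j2 < i" using index_less[OF j2(1) iv(1)] l(4) j2(2) iv(2) by simp
  ultimately
  show ?thesis using followed_concat[of j1 j2 "take i S" x y] j1 j2 by simp
qed

lemma after_followed: "after v x y \<Longrightarrow> followed (concat (drop (Suc i) S)) x y"
proof -
  assume "after v x y"
  then obtain l1 l2 where l: "occ x l1" "occ y l2" "v < l1" "l1 < l2" unfolding after_def by blast
  obtain j1 where j1: "j1 < length S" "l1 = leaf_list N ! j1" "x \<in> set (S!j1)" using occ_index[OF l(1)] by blast
  obtain j2 where j2: "j2 < length S" "l2 = leaf_list N ! j2" "y \<in> set (S!j2)" using occ_index[OF l(2)] by blast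
  have "i < j1" using index_less[OF iv(1) j1(1)] l(3) j1(2) iv(2) by simp
  moreover have "j1 < j2" using index_less[OF j1(1) j2(1)] l(4) j1(2) j2(2) by simp
  ultimately
  show ?thesis using followed_concat[of "j1 - Suc i" "j2 - Suc i" "drop (Suc i) S" x y] j1 j2 by simp
qed

lemma occurs_before_mem: "occurs_before v x \<Longrightarrow> x \<in> set (concat (take i S))"
proof -
  assume "occurs_before v x"
  then obtain l where l: "occ x l" "l < v" unfolding occurs_before_def by blast
  obtain j where j: "j < length S" "l = leaf_list N ! j" "x \<in> set (S!j)" using occ_index[OF l(1)] by blast
  have "j < i" using index_less[OF j(1) iv(1)] l(2) j(2) iv(2) by simp
  then show ?thesis using j(1,3) by (rule in_concat_take)
qed

lemma occurs_after_mem: "occurs_after v x \<Longrightarrow> x \<in> set (concat (drop (Suc i) S))"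
proof -
  assume "occurs_after v x"
  then obtain l where l: "occ x l" "v < l" unfolding occurs_after_def by blast
  obtain j where j: "j < length S" "l = leaf_list N ! j" "x \<in> set (S!j)" using occ_index[OF l(1)] by blast
  have "i < j" using index_less[OF iv(1) j(1)] l(2) j(2) iv(2) by simp
  then show ?thesis using j(1,3) by (rule in_concat_drop)
qed

lemma nested_leaf_nested:
  assumes h: "nested_leaf v a b" "a \<noteq> b"
  shows "nested S i a b"
proof -
  have nest: "nested S i a b"
    if "followed (concat (take i S)) x y" "followed (concat (drop (Suc i) S)) y x" "{x, y} = {a, b}" for x y
    unfolding nested_def
  proof (intro exI conjI)
    show "{x, y} = {a, b}" by (rule that(3))
    show "followed (concat (take i S)) x y" by (rule that(1))
    show "followed (concat (drop (Suc i) S)) y x" by (rule that(2))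
  qed
  have ab: "{a, b} = {a, b}" "{b, a} = {a, b}" by auto
  from h(1) have "(before v a b \<and> after v b a) \<or> (before v b a \<and> after v a b) \<or>
     (occurs_before v a \<and> occurs_before v b \<and> after v a b \<and> after v b a) \<or>
     (before v a b \<and> before v b a \<and> occurs_after v a \<and> occurs_after v b)"
    by (simp only: nested_leaf_def)
  then show ?thesis
  proof (elim disjE conjE)
    assume "before v a b" "after v b a"
    then show ?thesis by (rule nest[OF before_followed after_followed ab(1)])
  next
    assume "before v b a" "after v a b"
    then show ?thesis by (rule nest[OF before_followed after_followed ab(2)])
  next
    assume occ: "occurs_before v a" "occurs_before v b" and aft: "after v a b" "after v b a"
    have "followed (concat (take i S)) a b \<or> followed (concat (take i S)) b a"
      using followed_either[OF occurs_before_mem[OF occ(1)] occurs_before_mem[OF occ(2)] h(2)] .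
    then consider "followed (concat (take i S)) a b" | "followed (concat (take i S)) b a" by blast
    then show ?thesis
    proof cases
      case 1 then show ?thesis by (rule nest[OF _ after_followed[OF aft(2)] ab(1)])
    next
      case 2 then show ?thesis by (rule nest[OF _ after_followed[OF aft(1)] ab(2)])
    qed
  next
    assume bef: "before v a b" "before v b a" and occ: "occurs_after v a" "occurs_after v b"
    have "followed (concat (drop (Suc i) S)) a b \<or> followed (concat (drop (Suc i) S)) b a"
      using followed_either[OF occurs_after_mem[OF occ(1)] occurs_after_mem[OF occ(2)] h(2)] .
    then consider "followed (concat (drop (Suc i) S)) b a" | "followed (concat (drop (Suc i) S)) a b" by blast
    then show ?thesis
    proof cases
      case 1 then show ?thesis by (rule nest[OF before_followed[OF bef(1)] _ ab(1)])
    next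
      case 2 then show ?thesis by (rule nest[OF before_followed[OF bef(2)] _ ab(2)])
    qed
  qed
qed

end

end

theorem lemma4:
  fixes S :: "'a list list" and N :: "node set" and B :: "node \<Rightarrow> 'a list option"
    and cr lhe rhe :: "'a \<Rightarrow> node" and v :: node and i :: nat and a b :: 'a and \<beta> :: "'a list"
  assumes "blocked_twice S"
    and "deriv S N B cr lhe rhe"
    and "v \<in> tleaves N" and "i < length S" and "leaf_list N ! i = v"
    and "B v = Some \<beta>" and "a \<in> set \<beta>" and "b \<in> set \<beta>" and "a \<noteq> b"
    and "v \<noteq> lwt N B cr a" and "v \<noteq> rwt N B cr a"
    and "v \<noteq> lwt N B cr b" and "v \<noteq> rwt N B cr b"
    and "\<not> feather N B cr lhe rhe a v" and "\<not> feather N B cr lhe rhe b v"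
  shows "nested S i a b"
proof -
  interpret tree_inv S N B cr lhe rhe using deriv_tree_inv[OF assms(2)] .
  have "occ a v" "occ b v" using assms(3,6-8) tleaves_sub by (auto simp: occ_def inblk_def)
  then have "nested_leaf v a b" by (rule nested_leaf_at) (rule assms)+
  then show ?thesis using nested_leaf_nested[OF assms(4,5)] assms(9) by blast
qed

end
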